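(* Let $N\ge5$, $\mu>0$, $2<p<2+\frac4N$ and $0<c<c_*$. The functional $I$ is bounded from below on $V_r(c)$, and $m_*(c):=\inf_{u\in V_r(c)}I(u)<0$.
   Context: $4^*:=\frac{2N}{N-4}$, $\gamma_p:=\frac N2(\frac12-\frac1p)$. $C_{N,p}$ is the (optimal) Gagliardo–Nirenberg constant with $\|u\|_p\le C_{N,p}\|\Delta u\|_2^{\gamma_p}\|u\|_2^{1-\gamma_p}$ on $H^2(\mathbb R^N)$; $S:=\inf_{u\in H^2\setminus\{0\}}\|\Delta u\|_2^2/\|u\|_{4^*}^2$. $I(u)=\frac12\|\Delta u\|_2^2+\frac12\|\nabla u\|_2^2-\frac{\mu}{p}\|u\|_p^p-\frac1{4^*}\|u\|_{4^*}^{4^*}$ on $H^2(\mathbb R^N)$. $H^2_r(\mathbb R^N):=\{u\in H^2(\mathbb R^N): u\text{ radially decreasing}\}$, $S_r(c):=\{u\in H^2_r:\|u\|_2^2=c\}$. $\mathcal E:=\frac{4^*-p\gamma_p}{2-p\gamma_p}\left(\frac{(2-p\gamma_p)\mu C^p_{N,p}}{(4^*-2)p}\right)^{\frac{4^*-2}{4^*-p\gamma_p}}\left(4^*S^{\frac{4^*}{2}}\right)^{\frac{p\gamma_p-2}{4^*-p\gamma_p}}$, $c_*:=(\frac{1}{2\mathcal E})^{\frac{2(4^*-p\gamma_p)}{p(1-\gamma_p)(4^*-2)}}$; $r_c:=\left(\frac{(2-p\gamma_p)\mu 4^*S^{4^*/2} C^p_{N,p}c^{p(1-\gamma_p)/2}}{(4^*-2)p}\right)^{\frac{1}{4^*-p\gamma_p}}$,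 $r_*:=r_{c_*}$, and $V_r(c):=\{u\in S_r(c):\|\Delta u\|_2^2+\|\nabla u\|_2^2<r_*^2\}$. *)

theory Defs
  imports "HOL-Analysis.Analysis"
begin

text \<open>Functions on R^N are modelled as real-valued functions on real^'n, with N = CARD('n).\<close>

definition dimN :: "('n::finite) itself \<Rightarrow> real" where
  "dimN _ = real CARD('n)"

definition cpartial :: "'n::finite \<Rightarrow> (real^'n \<Rightarrow> real) \<Rightarrow> real^'n \<Rightarrow> real" where
  "cpartial i f x = deriv (\<lambda>t. f (x + t *\<^sub>R axis i 1)) 0"

fun Ck :: "nat \<Rightarrow> (real^'n::finite \<Rightarrow> real) \<Rightarrow> bool" where
  "Ck 0 f = continuous_on UNIV f"
| "Ck (Suc k) f = (continuous_on UNIV f \<and>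
      (\<forall>i x. (\<lambda>t. f (x + t *\<^sub>R axis i 1)) differentiable (at 0)) \<and>
      (\<forall>i. Ck k (cpartial i f)))"

definition test_fun :: "(real^'n::finite \<Rightarrow> real) \<Rightarrow> bool" where
  "test_fun \<phi> \<longleftrightarrow> (\<forall>k. Ck k \<phi>) \<and> bounded {x. \<phi> x \<noteq> 0}"

definition inLp :: "real \<Rightarrow> (real^'n::finite \<Rightarrow> real) \<Rightarrow> bool" where
  "inLp q u \<longleftrightarrow> u \<in> borel_measurable lborel \<and> integrable lborel (\<lambda>x. \<bar>u x\<bar> powr q)"

definition Lnorm :: "real \<Rightarrow> (real^'n::finite \<Rightarrow> real) \<Rightarrow> real" where
  "Lnorm q u = (\<integral>x. \<bar>u x\<bar> powr q \<partial>lborel) powr (1 / q)"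

definition has_weak_partial :: "'n::finite \<Rightarrow> (real^'n \<Rightarrow> real) \<Rightarrow> (real^'n \<Rightarrow> real) \<Rightarrow> bool" where
  "has_weak_partial i u v \<longleftrightarrow>
     (\<forall>\<phi>. test_fun \<phi> \<longrightarrow>
        (\<integral>x. u x * cpartial i \<phi> x \<partial>lborel) = - (\<integral>x. v x * \<phi> x \<partial>lborel))"

definition wpartial :: "'n::finite \<Rightarrow> (real^'n \<Rightarrow> real) \<Rightarrow> real^'n \<Rightarrow> real" where
  "wpartial i u = (SOME v. inLp 2 v \<and> has_weak_partial i u v)"

definition H2 :: "(real^'n::finite \<Rightarrow> real) set" where
  "H2 = {u. inLp 2 u \<and>
           (\<forall>i. \<exists>v. inLp 2 v \<and> has_weak_partial i u v \<and>
              (\<forall>j. \<exists>w. inLp 2 w \<and> has_weak_partial j v w))}"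

definition grad_norm2 :: "(real^'n::finite \<Rightarrow> real) \<Rightarrow> real" where
  "grad_norm2 u = (\<Sum>i\<in>UNIV. (Lnorm 2 (wpartial i u))\<^sup>2)"

definition wlaplace :: "(real^'n::finite \<Rightarrow> real) \<Rightarrow> real^'n \<Rightarrow> real" where
  "wlaplace u = (\<lambda>x. \<Sum>i\<in>UNIV. wpartial i (wpartial i u) x)"

definition crit :: "('n::finite) itself \<Rightarrow> real" where
  "crit n = 2 * dimN n / (dimN n - 4)"

definition gam :: "('n::finite) itself \<Rightarrow> real \<Rightarrow> real" where
  "gam n p = dimN n / 2 * (1/2 - 1/p)"

definition GN_const :: "('n::finite) itself \<Rightarrow> real \<Rightarrow> real" where
  "GN_const n p = Sup {Lnorm p u / (Lnorm 2 (wlaplace u) powr gam n p * Lnorm 2 u powr (1 - gam n p))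
                        | u :: real^'n \<Rightarrow> real. u \<in> H2 \<and> Lnorm 2 u \<noteq> 0}"

definition Sob_const :: "('n::finite) itself \<Rightarrow> real" where
  "Sob_const n = Inf {(Lnorm 2 (wlaplace u))\<^sup>2 / (Lnorm (crit n) u)\<^sup>2
                        | u :: real^'n \<Rightarrow> real. u \<in> H2 \<and> Lnorm 2 u \<noteq> 0}"

definition Ifun :: "real \<Rightarrow> real \<Rightarrow> (real^'n::finite \<Rightarrow> real) \<Rightarrow> real" where
  "Ifun \<mu> p u = 1/2 * (Lnorm 2 (wlaplace u))\<^sup>2 + 1/2 * grad_norm2 u
      - \<mu> / p * Lnorm p u powr p - 1 / crit TYPE('n) * Lnorm (crit TYPE('n)) u powr crit TYPE('n)"

definition radially_decreasing :: "(real^'n::finite \<Rightarrow> real) \<Rightarrow> bool" where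
  "radially_decreasing u \<longleftrightarrow> (\<forall>x y. norm x \<le> norm y \<longrightarrow> u y \<le> u x)"

definition H2r :: "(real^'n::finite \<Rightarrow> real) set" where
  "H2r = {u \<in> H2. radially_decreasing u}"

definition Sr :: "real \<Rightarrow> (real^'n::finite \<Rightarrow> real) set" where
  "Sr c = {u \<in> H2r. (Lnorm 2 u)\<^sup>2 = c}"

definition Ecal :: "('n::finite) itself \<Rightarrow> real \<Rightarrow> real \<Rightarrow> real" where
  "Ecal n \<mu> p = (let s = crit n; g = gam n p; C = GN_const n p; S = Sob_const n in
     (s - p * g) / (2 - p * g)
     * (((2 - p * g) * \<mu> * C powr p) / ((s - 2) * p)) powr ((s - 2) / (s - p * g))
     * (s * S powr (s / 2)) powr ((p * g - 2) / (s - p * g)))"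

definition cstar :: "('n::finite) itself \<Rightarrow> real \<Rightarrow> real \<Rightarrow> real" where
  "cstar n \<mu> p = (let s = crit n; g = gam n p in
     (1 / (2 * Ecal n \<mu> p)) powr (2 * (s - p * g) / (p * (1 - g) * (s - 2))))"

definition rc :: "('n::finite) itself \<Rightarrow> real \<Rightarrow> real \<Rightarrow> real \<Rightarrow> real" where
  "rc n \<mu> p c = (let s = crit n; g = gam n p; C = GN_const n p; S = Sob_const n in
     (((2 - p * g) * \<mu> * s * S powr (s / 2) * C powr p * c powr (p * (1 - g) / 2)) / ((s - 2) * p))
       powr (1 / (s - p * g)))"

definition rstar :: "('n::finite) itself \<Rightarrow> real \<Rightarrow> real \<Rightarrow> real" where
  "rstar n \<mu> p = rc n \<mu> p (cstar n \<mu> p)"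

definition Vr :: "real \<Rightarrow> real \<Rightarrow> real \<Rightarrow> (real^'n::finite \<Rightarrow> real) set" where
  "Vr \<mu> p c = {u \<in> Sr c. (Lnorm 2 (wlaplace u))\<^sup>2 + grad_norm2 u < (rstar TYPE('n) \<mu> p)\<^sup>2}"

end

theory Submission
  imports Defs "HOL-Computational_Algebra.Polynomial"
begin

text \<open>
  The lower bound: on \<open>V\<^sub>r(c)\<close> we have \<open>\<parallel>\<Delta>u\<parallel>\<^sub>2\<^sup>2 < r\<^sub>*\<^sup>2\<close>, so the Sobolev inequality bounds
  \<open>\<parallel>u\<parallel>\<^sub>4\<^sub>*\<^sup>4\<^sup>*\<close> by \<open>(r\<^sub>*\<^sup>2/S)\<^bsup>4\<^sup>*\<^sup>/\<^sup>2\<^esup>\<close>, and since \<open>2 < p < 4\<^sup>*\<close> the pointwise inequality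
  \<open>|u|\<^sup>p \<le> |u|\<^sup>2 + |u|\<^sup>4\<^sup>*\<close> then bounds the \<open>L\<^sup>p\<close> term.

  Negativity: the radial functions \<open>u\<^sub>t(x) = a\<^sub>t (1 - t\<^sup>2|x|\<^sup>2)\<^sub>+\<^sup>3\<close>, with \<open>a\<^sub>t\<close> chosen so that
  \<open>\<parallel>u\<^sub>t\<parallel>\<^sub>2\<^sup>2 = c\<close>, satisfy \<open>\<parallel>\<Delta>u\<^sub>t\<parallel>\<^sub>2\<^sup>2 + \<parallel>\<nabla>u\<^sub>t\<parallel>\<^sub>2\<^sup>2 = O(t\<^sup>2)\<close> while \<open>\<parallel>u\<^sub>t\<parallel>\<^sub>p\<^sup>p\<close> is a
  multiple of \<open>t\<^bsup>2p\<gamma>\<^sub>p\<^esup>\<close> with \<open>2p\<gamma>\<^sub>p < 2\<close>. Hence for small \<open>t\<close>, \<open>u\<^sub>t \<in> V\<^sub>r(c)\<close> and \<open>I(u\<^sub>t) < 0\<close>.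
  The hypothesis \<open>c < c\<^sub>*\<close> only serves to make \<open>S\<close>, \<open>C\<^sub>N\<^sub>,\<^sub>p\<close> and \<open>r\<^sub>*\<close> nonzero.

  Most of the work lies in computing the weak derivatives of \<open>u\<^sub>t\<close>: they are determined only
  almost everywhere, by the fundamental lemma of the calculus of variations, which in turn
  needs smooth test functions approximating the indicators of boxes.
\<close>

section \<open>Smooth bump functions\<close>

definition infinitely_differentiable :: "(real \<Rightarrow> real) \<Rightarrow> bool" where
  "infinitely_differentiable f \<longleftrightarrow> (\<forall>n x. ((deriv ^^ n) f) field_differentiable at x)"

lemma infinitely_differentiable_deriv:
  "infinitely_differentiable f \<Longrightarrow> infinitely_differentiable (deriv f)"
  unfolding infinitely_differentiable_def by (metis funpow_Suc_right o_apply)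

lemma infinitely_differentiable_higher_deriv:
  "infinitely_differentiable f \<Longrightarrow> infinitely_differentiable ((deriv ^^ n) f)"
  by (induction n) (auto simp: infinitely_differentiable_deriv)

lemma infinitely_differentiable_DERIV:
  "infinitely_differentiable f \<Longrightarrow> (f has_field_derivative deriv f x) (at x)"
  unfolding infinitely_differentiable_def by (metis DERIV_deriv_iff_field_differentiable funpow_0)

lemma infinitely_differentiable_continuous:
  "infinitely_differentiable f \<Longrightarrow> continuous_on UNIV f"
  by (meson DERIV_isCont continuous_at_imp_continuous_on infinitely_differentiable_DERIV)

lemma higher_deriv_add_real:
  fixes f g :: "real \<Rightarrow> real"
  assumes "\<And>j x. j < n \<Longrightarrow> ((deriv ^^ j) f) field_differentiable at x"
    and "\<And>j x. j < n \<Longrightarrow> ((deriv ^^ j) g) field_differentiable at x"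
  shows "(deriv ^^ n) (\<lambda>y. f y + g y) = (\<lambda>y. (deriv ^^ n) f y + (deriv ^^ n) g y)"
  using assms
proof (induction n arbitrary: f g)
  case (Suc n)
  have "deriv (\<lambda>y. f y + g y) = (\<lambda>y. deriv f y + deriv g y)"
    using Suc.prems[of 0] by (intro ext deriv_add) auto
  moreover have "(deriv ^^ n) (\<lambda>y. deriv f y + deriv g y)
      = (\<lambda>y. (deriv ^^ n) (deriv f) y + (deriv ^^ n) (deriv g) y)"
    using Suc.prems by (intro Suc.IH) (metis Suc_mono comp_apply funpow_Suc_right)+
  ultimately show ?case by (simp add: funpow_Suc_right del: funpow.simps)
qed simp

lemma higher_deriv_mult_differentiable:
  assumes "infinitely_differentiable f" "infinitely_differentiable g" "m \<le> n"
  shows "((deriv ^^ m) (\<lambda>y. f y * g y)) field_differentiable at x"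
  using assms
proof (induction n arbitrary: f g m x)
  case 0
  then have "f field_differentiable at x" "g field_differentiable at x"
    unfolding infinitely_differentiable_def by (metis funpow_0)+
  with 0 show ?case by (simp add: field_differentiable_mult)
next
  case (Suc n)
  note f = Suc.prems(1) and g = Suc.prems(2)
  show ?case
  proof (cases "m \<le> n")
    case True
    then show ?thesis using Suc.IH f g by blast
  next
    case False
    then have m: "m = Suc n" using Suc.prems(3) by simp
    have f': "infinitely_differentiable (deriv f)" and g': "infinitely_differentiable (deriv g)"
      using f g by (auto simp: infinitely_differentiable_deriv)
    have "deriv (\<lambda>y. f y * g y) = (\<lambda>y. f y * deriv g y + deriv f y * g y)"
      using f g unfolding infinitely_differentiable_def
      by (intro ext deriv_mult) (metis funpow_0)+
    moreover have "(deriv ^^ n) (\<lambda>y. f y * deriv g y + deriv f y * g y)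
        = (\<lambda>y. (deriv ^^ n) (\<lambda>y. f y * deriv g y) y + (deriv ^^ n) (\<lambda>y. deriv f y * g y) y)"
      by (rule higher_deriv_add_real) (use Suc.IH f g f' g' in auto)
    ultimately have "(deriv ^^ m) (\<lambda>y. f y * g y)
        = (\<lambda>y. (deriv ^^ n) (\<lambda>y. f y * deriv g y) y + (deriv ^^ n) (\<lambda>y. deriv f y * g y) y)"
      unfolding m by (simp only: funpow_Suc_right o_apply)
    then show ?thesis
      using Suc.IH f g f' g' by (auto intro!: field_differentiable_add)
  qed
qed

lemma infinitely_differentiable_mult:
  "infinitely_differentiable f \<Longrightarrow> infinitely_differentiable g \<Longrightarrow>
    infinitely_differentiable (\<lambda>y. f y * g y)"
  using higher_deriv_mult_differentiable unfolding infinitely_differentiable_def by blast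

lemma DERIV_affine_compose:
  assumes "(f has_field_derivative f') (at (c * y + d))"
  shows "((\<lambda>y. f (c * y + d)) has_field_derivative f' * c) (at y)"
proof -
  have "((\<lambda>y. c * y + d) has_field_derivative c) (at y)"
    by (auto intro!: derivative_eq_intros)
  from DERIV_chain2[where g="\<lambda>y. c * y + d", OF assms this] show ?thesis .
qed

lemma DERIV_higher_deriv_affine_compose:
  assumes "infinitely_differentiable f"
  shows "((\<lambda>y. (deriv ^^ n) f (c * y + d)) has_field_derivative
           (deriv ^^ Suc n) f (c * y + d) * c) (at y)"
  using DERIV_affine_compose[OF infinitely_differentiable_DERIV
      [OF infinitely_differentiable_higher_deriv[OF assms], of n "c * y + d"]]
  by simp

lemma higher_deriv_affine_compose:
  assumes "infinitely_differentiable f"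
  shows "(deriv ^^ n) (\<lambda>y. f (c * y + d)) = (\<lambda>y. c ^ n * (deriv ^^ n) f (c * y + d))"
proof (induction n)
  case (Suc n)
  have "((\<lambda>y. c ^ n * (deriv ^^ n) f (c * y + d)) has_field_derivative
          c ^ Suc n * (deriv ^^ Suc n) f (c * y + d)) (at y)" for y
    by (rule DERIV_cong[OF DERIV_cmult[OF DERIV_higher_deriv_affine_compose[OF assms]]]) simp
  then show ?case
    by (simp only: funpow.simps o_apply Suc) (intro ext DERIV_imp_deriv)
qed simp

lemma infinitely_differentiable_affine_compose:
  assumes "infinitely_differentiable f"
  shows "infinitely_differentiable (\<lambda>y. f (c * y + d))"
  unfolding infinitely_differentiable_def higher_deriv_affine_compose[OF assms]
proof (intro allI)
  fix n x
  show "(\<lambda>y. c ^ n * (deriv ^^ n) f (c * y + d)) field_differentiable at x"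
    using DERIV_cmult[OF DERIV_higher_deriv_affine_compose[OF assms, of n c d x], of "c ^ n"]
    unfolding field_differentiable_def by blast
qed

text \<open>All derivatives of \<open>e\<^sup>-\<^sup>1\<^sup>/\<^sup>y\<close> (extended by \<open>0\<close> to \<open>y \<le> 0\<close>) have the form
  \<open>p(1/y) e\<^sup>-\<^sup>1\<^sup>/\<^sup>y\<close>; \<open>exp_inv_dpoly\<close> computes the polynomial of the next derivative.\<close>

definition exp_inv_poly :: "real poly \<Rightarrow> real \<Rightarrow> real" where
  "exp_inv_poly P y = (if y > 0 then poly P (1 / y) * exp (- (1 / y)) else 0)"

definition exp_inv_dpoly :: "real poly \<Rightarrow> real poly" where
  "exp_inv_dpoly P = [:0, 0, 1:] * (P - pderiv P)"

lemma tendsto_poly_times_exp_neg_at_right_0: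
  fixes P :: "real poly"
  shows "((\<lambda>y. poly P (1 / y) * exp (- (1 / y))) \<longlongrightarrow> 0) (at_right 0)"
proof -
  have "((\<lambda>z. \<Sum>i\<le>degree P. coeff P i * (z ^ i / exp z)) \<longlongrightarrow> (\<Sum>i\<le>degree P. coeff P i * 0)) at_top"
    by (intro tendsto_sum tendsto_mult tendsto_const tendsto_power_div_exp_0)
  moreover have "poly P z * exp (- z) = (\<Sum>i\<le>degree P. coeff P i * (z ^ i / exp z))" for z
    by (simp add: poly_altdef exp_minus sum_distrib_right divide_inverse mult.assoc)
  ultimately have "((\<lambda>z. poly P z * exp (- z)) \<longlongrightarrow> 0) at_top"
    by simp
  moreover have "filterlim (\<lambda>y::real. 1 / y) at_top (at_right 0)"
    using filterlim_inverse_at_top_right by (simp add: inverse_eq_divide)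
  ultimately show ?thesis
    using filterlim_compose by (fastforce simp: o_def)
qed

lemma exp_inv_poly_DERIV_0: "(exp_inv_poly P has_field_derivative 0) (at 0)"
proof -
  have "((\<lambda>h. (exp_inv_poly P h - exp_inv_poly P 0) / (h - 0)) \<longlongrightarrow> 0) (at 0)"
    unfolding filterlim_at_split
  proof
    show "((\<lambda>h. (exp_inv_poly P h - exp_inv_poly P 0) / (h - 0)) \<longlongrightarrow> 0) (at_left 0)"
      by (rule tendsto_eventually)
        (unfold eventually_at_left_field, intro exI[of _ "-1"], auto simp: exp_inv_poly_def)
    show "((\<lambda>h. (exp_inv_poly P h - exp_inv_poly P 0) / (h - 0)) \<longlongrightarrow> 0) (at_right 0)"
    proof (rule Lim_transform_eventually)
      show "((\<lambda>y. poly ([:0,1:] * P) (1 / y) * exp (- (1 / y))) \<longlongrightarrow> 0) (at_right 0)"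
        by (rule tendsto_poly_times_exp_neg_at_right_0)
      show "\<forall>\<^sub>F h in at_right 0.
          poly ([:0,1:] * P) (1 / h) * exp (- (1 / h)) = (exp_inv_poly P h - exp_inv_poly P 0) / (h - 0)"
        unfolding eventually_at_right_field by (intro exI[of _ 1]) (auto simp: exp_inv_poly_def)
    qed
  qed
  then show ?thesis
    using has_field_derivative_iff by blast
qed

lemma exp_inv_poly_DERIV: "(exp_inv_poly P has_field_derivative exp_inv_poly (exp_inv_dpoly P) y) (at y)"
proof (cases y "0::real" rule: linorder_cases)
  case greater
  have "((\<lambda>y. poly P (1 / y) * exp (- (1 / y))) has_field_derivative
          poly (pderiv P) (1 / y) * (- 1 / y\<^sup>2) * exp (- (1 / y))
          + poly P (1 / y) * (exp (- (1 / y)) * (1 / y\<^sup>2))) (at y)"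
    using greater
    by (auto intro!: derivative_eq_intros DERIV_chain2[OF poly_DERIV] simp: power2_eq_square field_simps)
  moreover have "poly (pderiv P) (1 / y) * (- 1 / y\<^sup>2) * exp (- (1 / y))
      + poly P (1 / y) * (exp (- (1 / y)) * (1 / y\<^sup>2)) = exp_inv_poly (exp_inv_dpoly P) y"
    using greater
    by (simp add: exp_inv_poly_def exp_inv_dpoly_def algebra_simps power2_eq_square divide_simps)
  ultimately have "((\<lambda>y. poly P (1 / y) * exp (- (1 / y))) has_field_derivative
      exp_inv_poly (exp_inv_dpoly P) y) (at y)"
    by simp
  then show ?thesis
    by (rule has_field_derivative_transform_within_open[where S="{0<..}"])
      (use greater in \<open>auto simp: exp_inv_poly_def\<close>)
next
  case less
  have "((\<lambda>y. 0) has_field_derivative 0) (at y)"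
    by simp
  then have "(exp_inv_poly P has_field_derivative 0) (at y)"
    by (rule has_field_derivative_transform_within_open[where S="{..<0}"])
      (use less in \<open>auto simp: exp_inv_poly_def\<close>)
  then show ?thesis
    using less by (simp add: exp_inv_poly_def)
next
  case equal
  then show ?thesis
    using exp_inv_poly_DERIV_0 by (simp add: exp_inv_poly_def)
qed

lemma infinitely_differentiable_exp_inv_poly: "infinitely_differentiable (exp_inv_poly P)"
proof -
  have "(deriv ^^ n) (exp_inv_poly P) = exp_inv_poly ((exp_inv_dpoly ^^ n) P)" for n
    by (induction n) (auto intro!: DERIV_imp_deriv exp_inv_poly_DERIV)
  then show ?thesis
    unfolding infinitely_differentiable_def field_differentiable_def
    using exp_inv_poly_DERIV by metis
qed

lemma exp_inv_poly_1: "exp_inv_poly 1 y = (if y > 0 then exp (- (1 / y)) else 0)"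
  by (simp add: exp_inv_poly_def)

definition interval_bump :: "real \<Rightarrow> real \<Rightarrow> real \<Rightarrow> real \<Rightarrow> real" where
  "interval_bump a b k y = exp_inv_poly 1 (k * y + (- k * a)) * exp_inv_poly 1 ((- k) * y + k * b)"

lemma infinitely_differentiable_interval_bump: "infinitely_differentiable (interval_bump a b k)"
  unfolding interval_bump_def
  by (intro infinitely_differentiable_mult infinitely_differentiable_affine_compose
      infinitely_differentiable_exp_inv_poly)

lemma interval_bump_bounds: "0 \<le> interval_bump a b k y" "interval_bump a b k y \<le> 1"
  unfolding interval_bump_def exp_inv_poly_1 by (auto intro: mult_le_one)

lemma interval_bump_outside: "k > 0 \<Longrightarrow> \<not> (a < y \<and> y < b) \<Longrightarrow> interval_bump a b k y = 0"
  unfolding interval_bump_def exp_inv_poly_1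
  by (auto simp: algebra_simps mult_le_cancel_left_pos not_less)

lemma interval_bump_tendsto:
  assumes "a < y" "y < b"
  shows "(\<lambda>k. interval_bump a b (real (Suc k)) y) \<longlonglongrightarrow> 1"
proof -
  have "(\<lambda>k. 1 / real (Suc k)) \<longlonglongrightarrow> 0"
    using LIMSEQ_inverse_real_of_nat by (simp add: inverse_eq_divide)
  then have "(\<lambda>k. exp (- (1 / (y - a) * (1 / real (Suc k)))) * exp (- (1 / (b - y) * (1 / real (Suc k)))))
      \<longlonglongrightarrow> exp (- (1 / (y - a) * 0)) * exp (- (1 / (b - y) * 0))"
    by (intro tendsto_intros)
  moreover have "interval_bump a b (real (Suc k)) y
      = exp (- (1 / (y - a) * (1 / real (Suc k)))) * exp (- (1 / (b - y) * (1 / real (Suc k))))" for k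
  proof -
    have "real (Suc k) * y + - real (Suc k) * a = (y - a) * real (Suc k)"
      "- real (Suc k) * y + real (Suc k) * b = (b - y) * real (Suc k)"
      by (simp_all add: algebra_simps)
    then show ?thesis
      using assms by (simp add: interval_bump_def exp_inv_poly_1)
  qed
  ultimately show ?thesis by simp
qed

section \<open>Test functions and the fundamental lemma of the calculus of variations\<close>

definition tensor_prod :: "('n::finite \<Rightarrow> real \<Rightarrow> real) \<Rightarrow> real^'n \<Rightarrow> real" where
  "tensor_prod f x = (\<Prod>j\<in>UNIV. f j (x $ j))"

lemma tensor_prod_line:
  "tensor_prod f (x + t *\<^sub>R axis i 1) = f i (x $ i + t) * (\<Prod>j\<in>UNIV - {i}. f j (x $ j))"
proof -
  have "tensor_prod f (x + t *\<^sub>R axis i 1)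
      = f i ((x + t *\<^sub>R axis i 1) $ i) * (\<Prod>j\<in>UNIV - {i}. f j ((x + t *\<^sub>R axis i 1) $ j))"
    unfolding tensor_prod_def by (rule prod.remove) auto
  also have "(\<Prod>j\<in>UNIV - {i}. f j ((x + t *\<^sub>R axis i 1) $ j)) = (\<Prod>j\<in>UNIV - {i}. f j (x $ j))"
    by (intro prod.cong) (auto simp: axis_def)
  finally show ?thesis by (simp add: axis_def)
qed

lemma tensor_prod_upd: "tensor_prod (f(i := g)) x = g (x $ i) * (\<Prod>j\<in>UNIV - {i}. f j (x $ j))"
proof -
  have "tensor_prod (f(i := g)) x = g (x $ i) * (\<Prod>j\<in>UNIV - {i}. (f(i := g)) j (x $ j))"
    unfolding tensor_prod_def by (subst prod.remove[of UNIV i]) auto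
  also have "(\<Prod>j\<in>UNIV - {i}. (f(i := g)) j (x $ j)) = (\<Prod>j\<in>UNIV - {i}. f j (x $ j))"
    by (intro prod.cong) auto
  finally show ?thesis .
qed

lemma tensor_prod_line_DERIV:
  assumes "infinitely_differentiable (f i)"
  shows "((\<lambda>t. tensor_prod f (x + t *\<^sub>R axis i 1)) has_field_derivative
           tensor_prod (f(i := deriv (f i))) x) (at 0)"
proof -
  have "((\<lambda>t. f i (1 * t + x $ i)) has_field_derivative deriv (f i) (1 * 0 + x $ i) * 1) (at 0)"
    by (rule DERIV_affine_compose, rule infinitely_differentiable_DERIV[OF assms])
  then have "((\<lambda>t. f i (x $ i + t)) has_field_derivative deriv (f i) (x $ i)) (at 0)"
    by (simp add: add.commute)
  then show ?thesis
    unfolding tensor_prod_line tensor_prod_upd by (rule DERIV_cmult_right)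
qed

lemma cpartial_tensor_prod:
  assumes "infinitely_differentiable (f i)"
  shows "cpartial i (tensor_prod f) = tensor_prod (f(i := deriv (f i)))"
  unfolding cpartial_def using DERIV_imp_deriv[OF tensor_prod_line_DERIV[of f i, OF assms]] by auto

lemma continuous_on_tensor_prod:
  fixes f :: "'n::finite \<Rightarrow> real \<Rightarrow> real"
  assumes "\<And>j. infinitely_differentiable (f j)"
  shows "continuous_on UNIV (tensor_prod f)"
proof -
  have "continuous_on UNIV (\<lambda>x::real^'n. f j (x $ j))" for j
    by (rule continuous_on_compose2[OF infinitely_differentiable_continuous[OF assms]
          linear_continuous_on[OF bounded_linear_vec_nth]]) auto
  then show ?thesis
    unfolding tensor_prod_def by (intro continuous_on_prod) auto
qed

lemma Ck_tensor_prod: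
  assumes "\<And>j. infinitely_differentiable (f j)"
  shows "Ck m (tensor_prod f)"
  using assms
proof (induction m arbitrary: f)
  case 0
  then show ?case by (simp add: continuous_on_tensor_prod)
next
  case (Suc m)
  have "Ck m (cpartial i (tensor_prod f))" for i
    unfolding cpartial_tensor_prod[OF Suc.prems]
    by (rule Suc.IH) (auto simp: Suc.prems infinitely_differentiable_deriv)
  then show ?case
    using tensor_prod_line_DERIV[of f, OF Suc.prems] continuous_on_tensor_prod[OF Suc.prems]
    by (auto simp: real_differentiable_def)
qed

definition box_bump :: "real^'n \<Rightarrow> real^'n \<Rightarrow> real \<Rightarrow> real^'n::finite \<Rightarrow> real" where
  "box_bump a b k = tensor_prod (\<lambda>j. interval_bump (a $ j) (b $ j) k)"

lemma box_bump_bounds: "0 \<le> box_bump a b k x" "box_bump a b k x \<le> 1"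
  unfolding box_bump_def tensor_prod_def
  by (auto intro!: prod_nonneg prod_le_1 interval_bump_bounds)

lemma box_bump_outside:
  assumes "k > 0" "x \<notin> box a b"
  shows "box_bump a b k x = 0"
proof -
  obtain j where "\<not> (a $ j < x $ j \<and> x $ j < b $ j)"
    using assms(2) unfolding mem_box_cart by blast
  then show ?thesis
    unfolding box_bump_def tensor_prod_def
    by (intro prod_zero) (use interval_bump_outside[OF assms(1)] in auto)
qed

lemma continuous_on_box_bump: "continuous_on UNIV (box_bump a b k)"
  unfolding box_bump_def by (intro continuous_on_tensor_prod infinitely_differentiable_interval_bump)

lemma test_fun_box_bump:
  assumes "k > 0"
  shows "test_fun (box_bump a b k)"
proof -
  have "{x. box_bump a b k x \<noteq> 0} \<subseteq> box a b"
    using box_bump_outside[OF assms] by blast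
  then have "bounded {x. box_bump a b k x \<noteq> 0}"
    using bounded_box bounded_subset by blast
  then show ?thesis
    unfolding test_fun_def box_bump_def
    by (auto intro: Ck_tensor_prod infinitely_differentiable_interval_bump)
qed

lemma box_bump_tendsto:
  fixes a b :: "real^'n::finite"
  shows "(\<lambda>k. box_bump a b (real (Suc k)) x) \<longlonglongrightarrow> indicator (box a b) x"
proof (cases "x \<in> box a b")
  case True
  then have "(\<lambda>k. \<Prod>j\<in>UNIV. interval_bump (a $ j) (b $ j) (real (Suc k)) (x $ j))
      \<longlonglongrightarrow> (\<Prod>j\<in>(UNIV::'n set). 1)"
    by (intro tendsto_prod interval_bump_tendsto) (auto simp: mem_box_cart)
  then show ?thesis
    using True by (simp add: box_bump_def tensor_prod_def)
qed (simp add: box_bump_outside)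

lemma integral_box_eq_0_if_orthogonal_test_funs:
  fixes h :: "real^'n::finite \<Rightarrow> real"
  assumes h: "h \<in> borel_measurable lborel"
    and h_box: "integrable lborel (\<lambda>x. h x * indicator (box a b) x)"
    and orth: "\<And>\<phi>. test_fun \<phi> \<Longrightarrow> (\<integral>x. h x * \<phi> x \<partial>lborel) = 0"
  shows "(\<integral>x. h x * indicator (box a b) x \<partial>lborel) = 0"
proof -
  have "(\<lambda>k. \<integral>x. h x * box_bump a b (real (Suc k)) x \<partial>lborel)
      \<longlonglongrightarrow> (\<integral>x. h x * indicator (box a b) x \<partial>lborel)"
  proof (rule integral_dominated_convergence[where w="\<lambda>x. norm (h x * indicator (box a b) x)"])
    show "(\<lambda>x. h x * box_bump a b (real (Suc k)) x) \<in> borel_measurable lborel" for k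
      using h borel_measurable_continuous_onI[OF continuous_on_box_bump] by measurable
    show "AE x in lborel. (\<lambda>k. h x * box_bump a b (real (Suc k)) x) \<longlonglongrightarrow> h x * indicator (box a b) x"
      by (intro AE_I2 tendsto_mult tendsto_const box_bump_tendsto)
    show "AE x in lborel. norm (h x * box_bump a b (real (Suc k)) x) \<le> norm (h x * indicator (box a b) x)" for k
      using box_bump_bounds[of a b "real (Suc k)"] box_bump_outside[of "real (Suc k)" _ a b]
      by (intro AE_I2) (auto simp: abs_mult indicator_def intro: mult_left_le)
  qed (use h_box in auto)
  moreover have "(\<lambda>k. \<integral>x. h x * box_bump a b (real (Suc k)) x \<partial>lborel) = (\<lambda>k. 0)"
    by (intro ext orth test_fun_box_bump) simp
  ultimately show ?thesis
    using LIMSEQ_unique tendsto_const by metis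
qed

lemma AE_eq_if_nn_integral_box_eq:
  fixes F G :: "'a::euclidean_space \<Rightarrow> ennreal"
  assumes F: "F \<in> borel_measurable lborel" and G: "G \<in> borel_measurable lborel"
    and box_eq: "\<And>a b. (\<integral>\<^sup>+x. F x * indicator (box a b) x \<partial>lborel) = (\<integral>\<^sup>+x. G x * indicator (box a b) x \<partial>lborel)"
    and box_finite: "\<And>a b. (\<integral>\<^sup>+x. F x * indicator (box a b) x \<partial>lborel) \<noteq> \<infinity>"
  shows "AE x in lborel. F x = G x"
proof -
  have "density lborel F = density lborel G"
  proof (rule measure_eqI_generator_eq[where E="range (\<lambda>(a, b). box a b)" and \<Omega>=UNIV
        and A="\<lambda>n::nat. box (- (real n *\<^sub>R One)) (real n *\<^sub>R One)"])
    show "Int_stable (range (\<lambda>(a, b). box a b :: 'a set))"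
      by (auto simp: Int_stable_def box_Int_box)
    show "sets (density lborel F) = sigma_sets UNIV (range (\<lambda>(a, b). box a b))"
      "sets (density lborel G) = sigma_sets UNIV (range (\<lambda>(a, b). box a b))"
      by (simp_all add: borel_eq_box)
    show "(\<Union>n. box (- (real n *\<^sub>R One)) (real n *\<^sub>R One :: 'a)) = UNIV"
      by (rule UN_box_eq_UNIV)
    show "emeasure (density lborel F) (box (- (real n *\<^sub>R One)) (real n *\<^sub>R One)) \<noteq> \<infinity>" for n
      using box_finite F by (simp add: emeasure_density)
    show "emeasure (density lborel F) X = emeasure (density lborel G) X"
      if "X \<in> range (\<lambda>(a, b). box a b)" for X
      using that box_eq F G by (auto simp: emeasure_density)
  qed auto
  then show ?thesis
    using sigma_finite_measure.density_unique[OF sigma_finite_lborel F G] by blast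
qed

text \<open>The positive and negative parts of \<open>h\<close> have equal integrals over all boxes, hence define the
  same measure.\<close>

lemma AE_eq_0_if_orthogonal_test_funs:
  fixes h :: "real^'n::finite \<Rightarrow> real"
  assumes h: "h \<in> borel_measurable lborel"
    and h_box: "\<And>a b. integrable lborel (\<lambda>x. h x * indicator (box a b) x)"
    and orth: "\<And>\<phi>. test_fun \<phi> \<Longrightarrow> (\<integral>x. h x * \<phi> x \<partial>lborel) = 0"
  shows "AE x in lborel. h x = 0"
proof -
  define F where "F = (\<lambda>x. ennreal (max 0 (h x)))"
  define G where "G = (\<lambda>x. ennreal (max 0 (- h x)))"
  have "AE x in lborel. F x = G x"
  proof (rule AE_eq_if_nn_integral_box_eq)
    show "F \<in> borel_measurable lborel" "G \<in> borel_measurable lborel"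
      unfolding F_def G_def using h by measurable
    fix a b :: "real^'n"
    let ?g = "\<lambda>x. h x * indicator (box a b) x"
    have pos: "integrable lborel (\<lambda>x. max 0 (?g x))" and neg: "integrable lborel (\<lambda>x. max 0 (- ?g x))"
      using h_box[of a b] by (auto intro: integrable_max)
    have F_eq: "(\<integral>\<^sup>+x. F x * indicator (box a b) x \<partial>lborel) = ennreal (\<integral>x. max 0 (?g x) \<partial>lborel)"
      using pos unfolding F_def
      by (subst nn_integral_eq_integral[symmetric]) (auto intro!: nn_integral_cong simp: indicator_def)
    have G_eq: "(\<integral>\<^sup>+x. G x * indicator (box a b) x \<partial>lborel) = ennreal (\<integral>x. max 0 (- ?g x) \<partial>lborel)"
      using neg unfolding G_def
      by (subst nn_integral_eq_integral[symmetric]) (auto intro!: nn_integral_cong simp: indicator_def)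
    have "(\<integral>x. max 0 (?g x) \<partial>lborel) - (\<integral>x. max 0 (- ?g x) \<partial>lborel)
        = (\<integral>x. max 0 (?g x) - max 0 (- ?g x) \<partial>lborel)"
      using pos neg by simp
    also have "\<dots> = (\<integral>x. ?g x \<partial>lborel)"
      by (intro Bochner_Integration.integral_cong) auto
    also have "\<dots> = 0"
      by (rule integral_box_eq_0_if_orthogonal_test_funs[OF h h_box orth])
    finally show "(\<integral>\<^sup>+x. F x * indicator (box a b) x \<partial>lborel) = (\<integral>\<^sup>+x. G x * indicator (box a b) x \<partial>lborel)"
      unfolding F_eq G_eq by simp
    show "(\<integral>\<^sup>+x. F x * indicator (box a b) x \<partial>lborel) \<noteq> \<infinity>"
      unfolding F_eq by simp
  qed
  then show ?thesis
    by eventually_elim (auto simp: F_def G_def ennreal_inj split: if_splits)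
qed
section \<open>Weak derivatives of continuously differentiable functions\<close>

lemma lborel_nn_integral_affine:
  fixes f :: "'a::euclidean_space \<Rightarrow> ennreal" and c :: real
  assumes c: "c \<noteq> 0" and f[measurable]: "f \<in> borel_measurable borel"
  shows "(\<integral>\<^sup>+x. f x \<partial>lborel) = \<bar>c\<bar> ^ DIM('a) * (\<integral>\<^sup>+x. f (t + c *\<^sub>R x) \<partial>lborel)"
  by (subst lborel_affine[OF c, of t]) (simp add: nn_integral_density nn_integral_distr nn_integral_cmult)

lemma lborel_integrable_affine:
  fixes f :: "'a::euclidean_space \<Rightarrow> real" and c :: real
  assumes f: "integrable lborel f" and c: "c \<noteq> 0"
  shows "integrable lborel (\<lambda>x. f (t + c *\<^sub>R x))"
proof -
  have [measurable]: "f \<in> borel_measurable borel"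
    using f by auto
  have "\<bar>c\<bar> ^ DIM('a) * (\<integral>\<^sup>+x. ennreal (norm (f (t + c *\<^sub>R x))) \<partial>lborel) < \<infinity>"
    using f unfolding integrable_iff_bounded by (subst (asm) lborel_nn_integral_affine[OF c, of _ t]) auto
  then show ?thesis
    using c unfolding integrable_iff_bounded by (auto simp: ennreal_mult_less_top power_abs)
qed

lemma lborel_integrable_affine_iff:
  fixes f :: "'a::euclidean_space \<Rightarrow> real" and c :: real
  assumes c: "c \<noteq> 0"
  shows "integrable lborel (\<lambda>x. f (t + c *\<^sub>R x)) \<longleftrightarrow> integrable lborel f"
proof
  assume "integrable lborel (\<lambda>x. f (t + c *\<^sub>R x))"
  from lborel_integrable_affine[OF this, of "1 / c" "- (1 / c) *\<^sub>R t"] c show "integrable lborel f"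
    by (simp add: algebra_simps)
qed (use lborel_integrable_affine c in auto)

lemma lborel_integral_affine:
  fixes f :: "'a::euclidean_space \<Rightarrow> real" and c :: real
  assumes c: "c \<noteq> 0"
  shows "(\<integral>x. f x \<partial>lborel) = \<bar>c\<bar> ^ DIM('a) * (\<integral>x. f (t + c *\<^sub>R x) \<partial>lborel)"
proof cases
  assume f[measurable]: "integrable lborel f"
  then have [measurable]: "f \<in> borel_measurable borel"
    by auto
  show ?thesis
    using c f lborel_integrable_affine[OF f c, of t]
    by (subst lborel_affine[OF c, of t]) (simp add: integral_density integral_distr)
next
  assume "\<not> integrable lborel f"
  with c show ?thesis
    by (simp add: lborel_integrable_affine_iff not_integrable_integral_eq)
qed

lemma lborel_integral_translate:
  fixes f :: "'a::euclidean_space \<Rightarrow> real"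
  shows "(\<integral>x. f x \<partial>lborel) = (\<integral>x. f (t + x) \<partial>lborel)"
  using lborel_integral_affine[of 1 f t] by simp

lemma lborel_integral_dilate:
  fixes f :: "real^'n::finite \<Rightarrow> real" and c :: real
  assumes "c > 0"
  shows "(\<integral>x. f (c *\<^sub>R x) \<partial>lborel) = (\<integral>x. f x \<partial>lborel) / c ^ CARD('n)"
  using lborel_integral_affine[of c f 0] assms by simp

definition cont_bdd_support :: "('a::euclidean_space \<Rightarrow> real) \<Rightarrow> bool" where
  "cont_bdd_support f \<longleftrightarrow> continuous_on UNIV f \<and> bounded {x. f x \<noteq> 0}"

lemma cont_bdd_support_if_vanishes_outside_ball:
  assumes "continuous_on UNIV f" "\<And>x. r < norm x \<Longrightarrow> f x = 0"
  shows "cont_bdd_support f"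
proof -
  have "{x. f x \<noteq> 0} \<subseteq> cball 0 r"
    using assms(2) by (force simp: not_le)
  then show ?thesis
    unfolding cont_bdd_support_def using assms(1) bounded_subset bounded_cball by blast
qed

lemma cont_bdd_support_vanishes_outside_ball:
  assumes "cont_bdd_support f"
  obtains R where "R > 0" "\<And>x. R \<le> norm x \<Longrightarrow> f x = 0"
proof -
  obtain R where "\<forall>x\<in>{x. f x \<noteq> 0}. norm x \<le> R"
    using assms unfolding cont_bdd_support_def bounded_iff by metis
  then show ?thesis
    by (intro that[of "max R 0 + 1"]) force+
qed

lemma cont_bdd_support_bounded:
  assumes "cont_bdd_support f"
  obtains M where "\<And>x. \<bar>f x\<bar> \<le> M"
proof -
  obtain R where R: "\<And>x. R \<le> norm x \<Longrightarrow> f x = 0"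
    using cont_bdd_support_vanishes_outside_ball[OF assms] by blast
  have "compact (f ` cball 0 R)"
    using assms unfolding cont_bdd_support_def
    by (intro compact_continuous_image) (auto intro: continuous_on_subset)
  then obtain M where M: "\<forall>y\<in>f ` cball 0 R. norm y \<le> M"
    using compact_imp_bounded bounded_iff by metis
  have "\<bar>f x\<bar> \<le> max M 0" for x
  proof (cases "x \<in> cball 0 R")
    case True
    then show ?thesis
      using M by (metis image_eqI max.coboundedI1 real_norm_def)
  next
    case False
    then show ?thesis using R[of x] by simp
  qed
  then show ?thesis
    using that by blast
qed

lemma cont_bdd_support_integrable:
  fixes f :: "'a::euclidean_space \<Rightarrow> real"
  assumes "cont_bdd_support f"
  shows "integrable lborel f"
proof -
  obtain R where R: "\<And>x. R \<le> norm x \<Longrightarrow> f x = 0"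
    using cont_bdd_support_vanishes_outside_ball[OF assms] by blast
  have "integrable lborel (\<lambda>x. indicator (cball 0 R) x *\<^sub>R f x)"
    using assms unfolding cont_bdd_support_def
    by (intro borel_integrable_compact) (auto intro: continuous_on_subset)
  moreover have "(\<lambda>x. indicator (cball 0 R) x *\<^sub>R f x) = f"
    using R by (force simp: fun_eq_iff indicator_def)
  ultimately show ?thesis
    by simp
qed

lemma cont_bdd_support_measurable:
  fixes f :: "'a::euclidean_space \<Rightarrow> real"
  shows "cont_bdd_support f \<Longrightarrow> f \<in> borel_measurable lborel"
  using borel_measurable_integrable cont_bdd_support_integrable by blast

lemma cont_bdd_support_mult_left:
  "cont_bdd_support f \<Longrightarrow> continuous_on UNIV g \<Longrightarrow> cont_bdd_support (\<lambda>x. g x * f x)"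
  unfolding cont_bdd_support_def by (auto intro: continuous_on_mult bounded_subset)

lemma cont_bdd_support_mult_right:
  "cont_bdd_support f \<Longrightarrow> continuous_on UNIV g \<Longrightarrow> cont_bdd_support (\<lambda>x. f x * g x)"
  using cont_bdd_support_mult_left[of f g] by (simp add: mult.commute)

lemma test_fun_cont_bdd_support: "test_fun \<phi> \<Longrightarrow> cont_bdd_support \<phi>"
  unfolding test_fun_def cont_bdd_support_def by (metis Ck.simps(1))

lemma test_fun_line_DERIV:
  assumes "test_fun \<phi>"
  shows "((\<lambda>s. \<phi> (x + s *\<^sub>R axis i 1)) has_field_derivative cpartial i \<phi> x) (at 0)"
  using assms unfolding test_fun_def cpartial_def
  by (metis Ck.simps(2) DERIV_deriv_iff_real_differentiable)

lemma continuous_on_cpartial_test_fun: "test_fun \<phi> \<Longrightarrow> continuous_on UNIV (cpartial i \<phi>)"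
  unfolding test_fun_def by (metis Ck.simps)

lemma line_DERIV_shift:
  fixes g :: "'a::real_normed_vector \<Rightarrow> real"
  assumes "\<And>x. ((\<lambda>s. g (x + s *\<^sub>R e)) has_field_derivative g' x) (at 0)"
  shows "((\<lambda>s. g (x + s *\<^sub>R e)) has_field_derivative g' (x + s0 *\<^sub>R e)) (at s0)"
proof -
  have "(\<lambda>s. g (x + (s + s0) *\<^sub>R e)) = (\<lambda>s. g ((x + s0 *\<^sub>R e) + s *\<^sub>R e))"
    by (simp add: scaleR_add_left algebra_simps)
  then have "((\<lambda>s. g (x + (s + s0) *\<^sub>R e)) has_field_derivative g' (x + s0 *\<^sub>R e)) (at 0)"
    using assms by simp
  then show ?thesis
    using DERIV_shift[of "\<lambda>s. g (x + s *\<^sub>R e)" "g' (x + s0 *\<^sub>R e)" 0 s0] by simp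
qed

lemma cont_bdd_support_line_derivative:
  fixes w :: "'a::euclidean_space \<Rightarrow> real"
  assumes w: "cont_bdd_support w" and w': "continuous_on UNIV w'" and e: "norm e = 1"
    and D: "\<And>x. ((\<lambda>s. w (x + s *\<^sub>R e)) has_field_derivative w' x) (at 0)"
  shows "cont_bdd_support w'"
proof -
  obtain R where R: "\<And>x. R \<le> norm x \<Longrightarrow> w x = 0"
    using cont_bdd_support_vanishes_outside_ball[OF w] by blast
  have "w' x = 0" if x: "R < norm x" for x
  proof -
    have zero: "w (x + s *\<^sub>R e) = 0" if "s \<in> ball 0 (norm x - R)" for s
    proof (rule R)
      have "norm x - norm (s *\<^sub>R e) \<le> norm (x + s *\<^sub>R e)"
        by (rule norm_diff_ineq)
      then show "R \<le> norm (x + s *\<^sub>R e)"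
        using that e by auto
    qed
    have "((\<lambda>s. 0) has_field_derivative 0) (at (0::real))"
      by simp
    then have "((\<lambda>s. w (x + s *\<^sub>R e)) has_field_derivative 0) (at 0)"
      by (rule has_field_derivative_transform_within_open[where S="ball 0 (norm x - R)"])
        (use x zero in auto)
    then show ?thesis
      using DERIV_unique[OF D] by blast
  qed
  then show ?thesis
    using w' by (intro cont_bdd_support_if_vanishes_outside_ball[of _ R]) auto
qed

text \<open>Integration by parts is obtained by passing to the limit in a discrete version,
  where it is just a change of variables by translation.\<close>

lemma cont_bdd_support_translate:
  assumes "cont_bdd_support f"
  shows "cont_bdd_support (\<lambda>x. f (x + t))"
proof -
  have "continuous_on UNIV f"
    using assms by (simp add: cont_bdd_support_def)
  then have "continuous_on UNIV (\<lambda>x. f (x + t))"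
    by (rule continuous_on_compose2) (auto intro: continuous_intros)
  moreover have "{x. f (x + t) \<noteq> 0} = (\<lambda>x. x - t) ` {x. f x \<noteq> 0}"
    by (auto simp: image_iff intro: exI[of _ "_ + t"]) (metis add_diff_cancel)
  moreover have "bounded ((\<lambda>x. x - t) ` {x. f x \<noteq> 0})"
    using assms bounded_translation[of "{x. f x \<noteq> 0}" "- t"] unfolding cont_bdd_support_def by simp
  ultimately show ?thesis
    unfolding cont_bdd_support_def by simp
qed

lemma integral_mult_diff_quotient_swap:
  fixes f \<phi> :: "'a::euclidean_space \<Rightarrow> real"
  assumes f: "continuous_on UNIV f" and \<phi>: "cont_bdd_support \<phi>"
  shows "(\<integral>x. f x * ((\<phi> (x + h *\<^sub>R e) - \<phi> x) / h) \<partial>lborel)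
       = - (\<integral>x. \<phi> x * ((f (x + (- h) *\<^sub>R e) - f x) / (- h)) \<partial>lborel)"
proof -
  have f_shift: "continuous_on UNIV (\<lambda>x. f (x + (- h) *\<^sub>R e))"
    by (rule continuous_on_compose2[OF f]) (auto intro: continuous_intros)
  have int: "integrable lborel (\<lambda>x. f x * \<phi> (x + h *\<^sub>R e))"
    "integrable lborel (\<lambda>x. f x * \<phi> x)" "integrable lborel (\<lambda>x. f (x + (- h) *\<^sub>R e) * \<phi> x)"
    using f f_shift \<phi> cont_bdd_support_translate[OF \<phi>]
    by (auto intro!: cont_bdd_support_integrable cont_bdd_support_mult_left)
  have "(\<integral>x. f x * ((\<phi> (x + h *\<^sub>R e) - \<phi> x) / h) \<partial>lborel)
      = ((\<integral>x. f x * \<phi> (x + h *\<^sub>R e) \<partial>lborel) - (\<integral>x. f x * \<phi> x \<partial>lborel)) / h"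
    using int by (simp add: diff_divide_distrib right_diff_distrib)
  also have "(\<integral>x. f x * \<phi> (x + h *\<^sub>R e) \<partial>lborel) = (\<integral>x. f (x + (- h) *\<^sub>R e) * \<phi> x \<partial>lborel)"
    using lborel_integral_translate[of "\<lambda>x. f x * \<phi> (x + h *\<^sub>R e)" "(- h) *\<^sub>R e"]
    by (simp add: algebra_simps)
  also have "((\<integral>x. f (x + (- h) *\<^sub>R e) * \<phi> x \<partial>lborel) - (\<integral>x. f x * \<phi> x \<partial>lborel)) / h
      = - (\<integral>x. \<phi> x * ((f (x + (- h) *\<^sub>R e) - f x) / (- h)) \<partial>lborel)"
    using int by (simp add: diff_divide_distrib right_diff_distrib mult.commute)
  finally show ?thesis .
qed

lemma abs_line_diff_quotient_le:
  fixes w :: "'a::real_normed_vector \<Rightarrow> real"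
  assumes D: "\<And>x. ((\<lambda>s. w (x + s *\<^sub>R e)) has_field_derivative w' x) (at 0)"
    and M: "\<And>x. \<bar>w' x\<bar> \<le> M" and h: "h \<noteq> 0"
  shows "\<bar>(w (x + h *\<^sub>R e) - w x) / h\<bar> \<le> M"
proof -
  have "norm (w (x + h *\<^sub>R e) - w (x + 0 *\<^sub>R e)) \<le> M * norm (h - 0)"
    by (rule field_differentiable_bound[where S=UNIV and f="\<lambda>s. w (x + s *\<^sub>R e)"])
      (auto intro: line_DERIV_shift D M)
  then show ?thesis
    using h by (simp add: abs_div divide_le_eq)
qed

lemma tendsto_line_diff_quotient:
  fixes w :: "'a::real_normed_vector \<Rightarrow> real"
  assumes D: "((\<lambda>s. w (x + s *\<^sub>R e)) has_field_derivative w' x) (at 0)"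
    and h: "h \<longlonglongrightarrow> 0" "\<And>k. h k \<noteq> 0"
  shows "(\<lambda>k. (w (x + h k *\<^sub>R e) - w x) / h k) \<longlonglongrightarrow> w' x"
proof -
  have "((\<lambda>y. (w (x + y *\<^sub>R e) - w x) / y) \<longlongrightarrow> w' x) (at 0)"
    using D unfolding has_field_derivative_iff by simp
  moreover have "filterlim h (at 0) sequentially"
    using h unfolding filterlim_at by auto
  ultimately show ?thesis
    by (rule filterlim_compose)
qed

lemma tendsto_integral_mult_diff_quotient:
  fixes v w w' :: "'a::euclidean_space \<Rightarrow> real"
  assumes v: "cont_bdd_support v" and w: "continuous_on UNIV w" and w': "cont_bdd_support w'"
    and D: "\<And>x. ((\<lambda>s. w (x + s *\<^sub>R e)) has_field_derivative w' x) (at 0)"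
    and h: "h \<longlonglongrightarrow> 0" "\<And>k. h k \<noteq> 0"
  shows "(\<lambda>k. \<integral>x. v x * ((w (x + h k *\<^sub>R e) - w x) / h k) \<partial>lborel) \<longlonglongrightarrow> (\<integral>x. v x * w' x \<partial>lborel)"
proof -
  obtain R where R: "\<And>x. R \<le> norm x \<Longrightarrow> v x = 0"
    using cont_bdd_support_vanishes_outside_ball[OF v] by blast
  obtain Mv where Mv: "\<And>x. \<bar>v x\<bar> \<le> Mv"
    using cont_bdd_support_bounded[OF v] by blast
  obtain M where M: "\<And>x. \<bar>w' x\<bar> \<le> M"
    using cont_bdd_support_bounded[OF w'] by blast
  show ?thesis
  proof (rule integral_dominated_convergence)
    show "integrable lborel (\<lambda>x. indicator (cball 0 R) x *\<^sub>R (Mv * M))"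
      by (rule borel_integrable_compact) (auto intro: continuous_intros)
    show "AE x in lborel. norm (v x * ((w (x + h k *\<^sub>R e) - w x) / h k))
        \<le> indicator (cball 0 R) x *\<^sub>R (Mv * M)" for k
    proof (intro AE_I2)
      fix x
      have "\<bar>(w (x + h k *\<^sub>R e) - w x) / h k\<bar> \<le> M"
        by (rule abs_line_diff_quotient_le[OF D M h(2)])
      moreover have "0 \<le> M"
        using M[of x] by linarith
      ultimately have "\<bar>v x\<bar> * \<bar>(w (x + h k *\<^sub>R e) - w x) / h k\<bar> \<le> Mv * M"
        using Mv[of x] by (intro mult_mono) auto
      then show "norm (v x * ((w (x + h k *\<^sub>R e) - w x) / h k)) \<le> indicator (cball 0 R) x *\<^sub>R (Mv * M)"
        using R[of x] by (cases "x \<in> cball 0 R") (auto simp: abs_mult)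
    qed
    show "AE x in lborel. (\<lambda>k. v x * ((w (x + h k *\<^sub>R e) - w x) / h k)) \<longlonglongrightarrow> v x * w' x"
      by (intro AE_I2 tendsto_mult tendsto_const tendsto_line_diff_quotient[OF D h])
    show "(\<lambda>x. v x * ((w (x + h k *\<^sub>R e) - w x) / h k)) \<in> borel_measurable lborel" for k
    proof -
      have "continuous_on UNIV (\<lambda>x. w (x + h k *\<^sub>R e))"
        by (rule continuous_on_compose2[OF w]) (auto intro: continuous_intros)
      then have "continuous_on UNIV (\<lambda>x. v x * ((w (x + h k *\<^sub>R e) - w x) / h k))"
        using v w h(2)[of k] unfolding cont_bdd_support_def
        by (intro continuous_on_mult continuous_on_divide continuous_on_diff continuous_on_const) auto
      then show ?thesis
        using borel_measurable_continuous_onI by simp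
    qed
    show "(\<lambda>x. v x * w' x) \<in> borel_measurable lborel"
      using cont_bdd_support_measurable[OF v] cont_bdd_support_measurable[OF w'] by measurable
  qed
qed

lemma has_weak_partial_if_line_DERIV:
  fixes f f' :: "real^'n::finite \<Rightarrow> real"
  assumes f: "cont_bdd_support f" and f': "cont_bdd_support f'"
    and D: "\<And>x. ((\<lambda>s. f (x + s *\<^sub>R axis i 1)) has_field_derivative f' x) (at 0)"
  shows "has_weak_partial i f f'"
  unfolding has_weak_partial_def
proof (intro allI impI)
  fix \<phi> :: "real^'n \<Rightarrow> real"
  assume \<phi>: "test_fun \<phi>"
  define h where "h k = 1 / real (Suc k)" for k
  have h: "h \<longlonglongrightarrow> 0" "\<And>k. h k \<noteq> 0"
    unfolding h_def using LIMSEQ_inverse_real_of_nat by (auto simp: inverse_eq_divide)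
  have f_cont: "continuous_on UNIV f"
    using f by (simp add: cont_bdd_support_def)
  have \<phi>_cbs: "cont_bdd_support \<phi>"
    by (rule test_fun_cont_bdd_support[OF \<phi>])
  have \<phi>': "cont_bdd_support (cpartial i \<phi>)"
    by (rule cont_bdd_support_line_derivative[OF \<phi>_cbs continuous_on_cpartial_test_fun[OF \<phi>] _
          test_fun_line_DERIV[OF \<phi>]]) simp
  have "(\<lambda>k. \<integral>x. f x * ((\<phi> (x + h k *\<^sub>R axis i 1) - \<phi> x) / h k) \<partial>lborel)
      \<longlonglongrightarrow> (\<integral>x. f x * cpartial i \<phi> x \<partial>lborel)"
    using \<phi>_cbs unfolding cont_bdd_support_def
    by (intro tendsto_integral_mult_diff_quotient[OF f _ \<phi>' test_fun_line_DERIV[OF \<phi>] h]) auto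
  moreover have "(\<lambda>k. \<integral>x. \<phi> x * ((f (x + (- h k) *\<^sub>R axis i 1) - f x) / (- h k)) \<partial>lborel)
      \<longlonglongrightarrow> (\<integral>x. \<phi> x * f' x \<partial>lborel)"
    using h by (intro tendsto_integral_mult_diff_quotient[OF \<phi>_cbs f_cont f' D tendsto_minus[OF h(1), simplified]]) auto
  ultimately have "(\<integral>x. f x * cpartial i \<phi> x \<partial>lborel) = - (\<integral>x. \<phi> x * f' x \<partial>lborel)"
    unfolding integral_mult_diff_quotient_swap[OF f_cont \<phi>_cbs]
    using LIMSEQ_unique tendsto_minus by blast
  then show "(\<integral>x. f x * cpartial i \<phi> x \<partial>lborel) = - (\<integral>x. f' x * \<phi> x \<partial>lborel)"
    by (simp add: mult.commute)
qed

lemma abs_powr_2: "\<bar>y::real\<bar> powr 2 = y\<^sup>2"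
  by (cases "y = 0") (auto simp: powr_numeral)

lemma inLp_2_iff: "inLp 2 v \<longleftrightarrow> v \<in> borel_measurable lborel \<and> integrable lborel (\<lambda>x. (v x)\<^sup>2)"
  unfolding inLp_def abs_powr_2 ..

lemma Lnorm_powr:
  assumes "q > 0"
  shows "Lnorm q u powr q = (\<integral>x. \<bar>u x\<bar> powr q \<partial>lborel)"
proof -
  have "(\<integral>x. \<bar>u x\<bar> powr q \<partial>lborel) \<ge> 0"
    by (intro integral_nonneg_AE AE_I2) simp
  then show ?thesis
    unfolding Lnorm_def using assms by (simp add: powr_powr)
qed

lemma Lnorm_2_squared: "(Lnorm 2 v)\<^sup>2 = (\<integral>x. (v x)\<^sup>2 \<partial>lborel)"
  using Lnorm_powr[of 2 v] by (simp add: abs_powr_2 Lnorm_def)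

lemma Lnorm_AE_cong:
  assumes "f \<in> borel_measurable lborel" "g \<in> borel_measurable lborel" "AE x in lborel. f x = g x"
  shows "Lnorm q f = Lnorm q g"
  unfolding Lnorm_def using assms by (subst integral_cong_AE[where g="\<lambda>x. \<bar>g x\<bar> powr q"]) auto

lemma cont_bdd_support_inLp_2:
  assumes "cont_bdd_support f"
  shows "inLp 2 f"
proof -
  have "cont_bdd_support (\<lambda>x. f x * f x)"
    using assms by (intro cont_bdd_support_mult_right) (auto simp: cont_bdd_support_def)
  then show ?thesis
    unfolding inLp_2_iff using cont_bdd_support_measurable[OF assms] cont_bdd_support_integrable
    by (simp add: power2_eq_square)
qed

lemma integrable_mult_if_inLp_2:
  assumes v: "inLp 2 v" and w: "inLp 2 w"
  shows "integrable lborel (\<lambda>x. v x * w x)"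
proof (rule Bochner_Integration.integrable_bound[where f="\<lambda>x. (v x)\<^sup>2 + (w x)\<^sup>2"])
  show "integrable lborel (\<lambda>x. (v x)\<^sup>2 + (w x)\<^sup>2)" "(\<lambda>x. v x * w x) \<in> borel_measurable lborel"
    using v w unfolding inLp_2_iff by auto
  have "\<bar>v x\<bar> * \<bar>w x\<bar> \<le> (v x)\<^sup>2 + (w x)\<^sup>2" for x
  proof -
    have "2 * \<bar>v x\<bar> * \<bar>w x\<bar> \<le> (v x)\<^sup>2 + (w x)\<^sup>2"
      using sum_squares_bound[of "\<bar>v x\<bar>" "\<bar>w x\<bar>"] by (simp add: power2_eq_square)
    moreover have "\<bar>v x\<bar> * \<bar>w x\<bar> \<ge> 0"
      by simp
    ultimately show ?thesis
      by linarith
  qed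
  then show "AE x in lborel. norm (v x * w x) \<le> norm ((v x)\<^sup>2 + (w x)\<^sup>2)"
    by (intro AE_I2) (simp add: abs_mult)
qed

lemma has_weak_partial_AE_unique:
  fixes u v w :: "real^'n::finite \<Rightarrow> real"
  assumes v: "inLp 2 v" and w: "inLp 2 w"
    and v_weak: "has_weak_partial i u v" and w_weak: "has_weak_partial i u w"
  shows "AE x in lborel. v x = w x"
proof -
  have "AE x in lborel. v x - w x = 0"
  proof (rule AE_eq_0_if_orthogonal_test_funs)
    show "(\<lambda>x. v x - w x) \<in> borel_measurable lborel"
      using v w unfolding inLp_2_iff by auto
    fix a b :: "real^'n"
    have "integrable lborel (indicator (box a b) :: real^'n \<Rightarrow> real)"
      using integrable_real_indicator[OF _ emeasure_lborel_box_finite[of a b]] by simp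
    moreover have "(\<lambda>x. (indicator (box a b) x :: real)\<^sup>2) = indicator (box a b)"
      by (auto simp: indicator_def fun_eq_iff)
    ultimately have "inLp 2 (indicator (box a b) :: real^'n \<Rightarrow> real)"
      unfolding inLp_2_iff by simp
    then show "integrable lborel (\<lambda>x. (v x - w x) * indicator (box a b) x)"
      using integrable_mult_if_inLp_2[OF v] integrable_mult_if_inLp_2[OF w] by (simp add: left_diff_distrib)
  next
    fix \<phi> :: "real^'n \<Rightarrow> real"
    assume \<phi>: "test_fun \<phi>"
    then have "inLp 2 \<phi>"
      by (intro cont_bdd_support_inLp_2 test_fun_cont_bdd_support)
    moreover have "(\<integral>x. v x * \<phi> x \<partial>lborel) = (\<integral>x. w x * \<phi> x \<partial>lborel)"
      using v_weak w_weak \<phi> unfolding has_weak_partial_def by (metis neg_equal_iff_equal)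
    ultimately show "(\<integral>x. (v x - w x) * \<phi> x \<partial>lborel) = 0"
      using integrable_mult_if_inLp_2[OF v] integrable_mult_if_inLp_2[OF w] by (simp add: left_diff_distrib)
  qed
  then show ?thesis
    by auto
qed

lemma wpartial_if_has_weak_partial:
  assumes "inLp 2 v" "has_weak_partial i u v"
  shows "inLp 2 (wpartial i u)" and "AE x in lborel. wpartial i u x = v x"
proof -
  have "inLp 2 (wpartial i u) \<and> has_weak_partial i u (wpartial i u)"
    unfolding wpartial_def by (rule someI[of _ v]) (use assms in auto)
  then show "inLp 2 (wpartial i u)" "AE x in lborel. wpartial i u x = v x"
    using has_weak_partial_AE_unique assms by blast+
qed

lemma has_weak_partial_AE_cong:
  assumes u: "u \<in> borel_measurable lborel" and u': "u' \<in> borel_measurable lborel"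
    and eq: "AE x in lborel. u x = u' x" and weak: "has_weak_partial i u v"
  shows "has_weak_partial i u' v"
  unfolding has_weak_partial_def
proof (intro allI impI)
  fix \<phi> :: "real^'a \<Rightarrow> real"
  assume \<phi>: "test_fun \<phi>"
  then have "cpartial i \<phi> \<in> borel_measurable lborel"
    using borel_measurable_continuous_onI[OF continuous_on_cpartial_test_fun] by simp
  then have "(\<integral>x. u' x * cpartial i \<phi> x \<partial>lborel) = (\<integral>x. u x * cpartial i \<phi> x \<partial>lborel)"
    using u u' eq by (intro integral_cong_AE) auto
  then show "(\<integral>x. u' x * cpartial i \<phi> x \<partial>lborel) = - (\<integral>x. v x * \<phi> x \<partial>lborel)"
    using weak \<phi> unfolding has_weak_partial_def by simp
qed

section \<open>The trial functions\<close>

lemma DERIV_max_0_power: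
  assumes "2 \<le> n"
  shows "((\<lambda>z. max 0 z ^ n) has_field_derivative real n * max 0 z ^ (n - 1)) (at (z::real))"
proof (cases z "0::real" rule: linorder_cases)
  case less
  have "((\<lambda>z. 0) has_field_derivative 0) (at z)"
    by simp
  then have "((\<lambda>z. max 0 z ^ n) has_field_derivative 0) (at z)"
    by (rule has_field_derivative_transform_within_open[where S="{..<0}"]) (use less assms in auto)
  then show ?thesis
    using less assms by (simp add: power_0_left)
next
  case greater
  have "((\<lambda>z. z ^ n) has_field_derivative real n * z ^ (n - 1)) (at z)"
    using DERIV_pow[of n z UNIV] by simp
  then have "((\<lambda>z. max 0 z ^ n) has_field_derivative real n * z ^ (n - 1)) (at z)"
    by (rule has_field_derivative_transform_within_open[where S="{0<..}"]) (use greater in auto)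
  then show ?thesis
    using greater by simp
next
  case equal
  have "((\<lambda>h. max 0 h ^ (n - 1)) \<longlongrightarrow> max 0 0 ^ (n - 1)) (at (0::real))"
    by (intro tendsto_intros)
  then have lim: "((\<lambda>h. max 0 h ^ (n - 1)) \<longlongrightarrow> 0) (at (0::real))"
    using assms by (simp add: power_0_left)
  have quotient: "max 0 h ^ (n - 1) = (max 0 h ^ n - max 0 0 ^ n) / (h - 0)"
    if "h \<noteq> 0" for h :: real
    using assms that by (cases "h > 0") (auto simp: power_eq_if max_def)
  have "\<forall>\<^sub>F h in at (0::real). max 0 h ^ (n - 1) = (max 0 h ^ n - max 0 0 ^ n) / (h - 0)"
    unfolding eventually_at_filter by (intro always_eventually allI impI) (rule quotient)
  with lim have "((\<lambda>h. (max 0 h ^ n - max 0 0 ^ n) / (h - 0)) \<longlongrightarrow> 0) (at (0::real))"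
    by (rule Lim_transform_eventually)
  then show ?thesis
    using equal assms by (simp add: has_field_derivative_iff power_0_left)
qed

lemma DERIV_max_0_power_compose:
  assumes "2 \<le> n" "(g has_field_derivative g') (at x)"
  shows "((\<lambda>x. max 0 (g x) ^ n) has_field_derivative real n * max 0 (g x) ^ (n - 1) * g') (at x)"
  using DERIV_chain2[OF DERIV_max_0_power[OF assms(1)] assms(2)] by (simp add: mult.assoc)

definition paraboloid :: "real \<Rightarrow> real^'n::finite \<Rightarrow> real" where
  "paraboloid t x = 1 - t\<^sup>2 * (x \<bullet> x)"

definition trial :: "real \<Rightarrow> real \<Rightarrow> real^'n::finite \<Rightarrow> real" where
  "trial a t x = a * max 0 (paraboloid t x) ^ 3"

text \<open>The profile \<open>(1 - |x|\<^sup>2)\<^sub>+\<^sup>3\<close> is \<open>C\<^sup>2\<close>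
  but not \<open>C\<^sup>3\<close>, which is just enough for \<open>H\<^sup>2\<close>.\<close>

definition trial_d1 :: "real \<Rightarrow> real \<Rightarrow> 'n \<Rightarrow> real^'n::finite \<Rightarrow> real" where
  "trial_d1 a t i x = - 6 * a * t\<^sup>2 * (x $ i) * max 0 (paraboloid t x) ^ 2"

definition trial_d2 :: "real \<Rightarrow> real \<Rightarrow> 'n \<Rightarrow> 'n \<Rightarrow> real^'n::finite \<Rightarrow> real" where
  "trial_d2 a t i j x = - 6 * a * t\<^sup>2 * (if i = j then 1 else 0) * max 0 (paraboloid t x) ^ 2
      + 24 * a * t ^ 4 * (x $ i) * (x $ j) * max 0 (paraboloid t x)"

lemma paraboloid_line_DERIV:
  "((\<lambda>s. paraboloid t (x + s *\<^sub>R axis j 1)) has_field_derivative - (t\<^sup>2 * (2 * (x $ j)))) (at 0)"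
proof -
  have "paraboloid t (x + s *\<^sub>R axis j 1) = 1 - t\<^sup>2 * (x \<bullet> x + 2 * s * (x $ j) + s\<^sup>2)" for s
    by (simp add: paraboloid_def inner_add_left inner_add_right inner_axis inner_axis' axis_nth
        power2_eq_square algebra_simps inner_commute[of "axis j 1" x])
  then show ?thesis
    by (simp only:) (auto intro!: derivative_eq_intros)
qed

lemma trial_line_DERIV:
  "((\<lambda>s. trial a t (x + s *\<^sub>R axis j 1)) has_field_derivative trial_d1 a t j x) (at 0)"
  using DERIV_cmult[OF DERIV_max_0_power_compose[OF _ paraboloid_line_DERIV, of 3], of a]
  by (simp add: trial_def trial_d1_def algebra_simps)

lemma trial_d1_line_DERIV:
  "((\<lambda>s. trial_d1 a t i (x + s *\<^sub>R axis j 1)) has_field_derivative trial_d2 a t i j x) (at 0)"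
proof -
  have nth: "(x + s *\<^sub>R axis j 1) $ i = x $ i + s * (if i = j then 1 else 0)" for s
    by (simp add: axis_def)
  have "((\<lambda>s. x $ i + s * (if i = j then 1 else 0)) has_field_derivative (if i = j then 1 else 0)) (at 0)"
    by (auto intro!: derivative_eq_intros)
  note D = DERIV_cmult[OF DERIV_mult[OF this DERIV_max_0_power_compose[OF _ paraboloid_line_DERIV, of 2]],
      of "- 6 * a * t\<^sup>2"]
  have "- 6 * a * t\<^sup>2 * ((if i = j then 1 else 0) * (max 0 (paraboloid t (x + 0 *\<^sub>R axis j 1)))\<^sup>2
      + real 2 * max 0 (paraboloid t (x + 0 *\<^sub>R axis j 1)) ^ (2 - 1) * - (t\<^sup>2 * (2 * x $ j))
        * (x $ i + 0 * (if i = j then 1 else 0)))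
      = trial_d2 a t i j x"
    by (simp add: trial_d2_def power2_eq_square power4_eq_xxxx algebra_simps)
  from DERIV_cong[OF D this] show ?thesis
    unfolding trial_d1_def nth by (simp only: mult.assoc)
qed

lemma paraboloid_neg_outside_ball:
  assumes "t \<noteq> 0" "1 / \<bar>t\<bar> < norm x"
  shows "paraboloid t x < 0"
proof -
  have "1 < \<bar>t\<bar> * norm x"
    using assms by (simp add: field_simps)
  then have "1 < (\<bar>t\<bar> * norm x)\<^sup>2"
    by (metis abs_ge_zero less_1_mult mult_nonneg_nonneg power2_eq_square)
  then show ?thesis
    by (simp add: paraboloid_def power_mult_distrib dot_square_norm)
qed

lemma continuous_on_paraboloid [continuous_intros]: "continuous_on S (paraboloid t)"
  unfolding paraboloid_def by (intro continuous_intros)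

lemma cont_bdd_support_trial:
  assumes "t \<noteq> 0"
  shows "cont_bdd_support (trial a t)"
proof (rule cont_bdd_support_if_vanishes_outside_ball[where r="1 / \<bar>t\<bar>"])
  show "continuous_on UNIV (trial a t)"
    unfolding trial_def by (intro continuous_intros)
  show "trial a t x = 0" if "1 / \<bar>t\<bar> < norm x" for x
    using paraboloid_neg_outside_ball[OF assms that] by (simp add: trial_def max_def)
qed

lemma cont_bdd_support_trial_d1:
  assumes "t \<noteq> 0"
  shows "cont_bdd_support (trial_d1 a t i)"
proof (rule cont_bdd_support_if_vanishes_outside_ball[where r="1 / \<bar>t\<bar>"])
  show "continuous_on UNIV (trial_d1 a t i)"
    unfolding trial_d1_def by (intro continuous_intros)
  show "trial_d1 a t i x = 0" if "1 / \<bar>t\<bar> < norm x" for x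
    using paraboloid_neg_outside_ball[OF assms that] by (simp add: trial_d1_def max_def)
qed

lemma cont_bdd_support_trial_d2:
  assumes "t \<noteq> 0"
  shows "cont_bdd_support (trial_d2 a t i j)"
proof (rule cont_bdd_support_if_vanishes_outside_ball[where r="1 / \<bar>t\<bar>"])
  show "continuous_on UNIV (trial_d2 a t i j)"
    unfolding trial_d2_def by (intro continuous_intros)
  show "trial_d2 a t i j x = 0" if "1 / \<bar>t\<bar> < norm x" for x
    using paraboloid_neg_outside_ball[OF assms that] by (simp add: trial_d2_def max_def)
qed

lemma has_weak_partial_trial: "t \<noteq> 0 \<Longrightarrow> has_weak_partial j (trial a t) (trial_d1 a t j)"
  by (rule has_weak_partial_if_line_DERIV[OF cont_bdd_support_trial cont_bdd_support_trial_d1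
        trial_line_DERIV])

lemma has_weak_partial_trial_d1: "t \<noteq> 0 \<Longrightarrow> has_weak_partial j (trial_d1 a t i) (trial_d2 a t i j)"
  by (rule has_weak_partial_if_line_DERIV[OF cont_bdd_support_trial_d1 cont_bdd_support_trial_d2
        trial_d1_line_DERIV])

lemma trial_in_H2r:
  assumes "t \<noteq> 0" "a \<ge> 0"
  shows "trial a t \<in> H2r"
proof -
  have "\<exists>v. inLp 2 v \<and> has_weak_partial i (trial a t) v \<and> (\<forall>j. \<exists>w. inLp 2 w \<and> has_weak_partial j v w)" for i
    using cont_bdd_support_inLp_2[OF cont_bdd_support_trial_d1[OF assms(1)]]
      cont_bdd_support_inLp_2[OF cont_bdd_support_trial_d2[OF assms(1)]]
      has_weak_partial_trial[OF assms(1)] has_weak_partial_trial_d1[OF assms(1)]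
    by blast
  then have "trial a t \<in> H2"
    unfolding H2_def using cont_bdd_support_inLp_2[OF cont_bdd_support_trial[OF assms(1)]] by blast
  moreover have "radially_decreasing (trial a t)"
    unfolding radially_decreasing_def
  proof (intro allI impI)
    fix x y :: "real^'n"
    assume "norm x \<le> norm y"
    then have "x \<bullet> x \<le> y \<bullet> y"
      by (simp add: dot_square_norm power_mono)
    then have "paraboloid t y \<le> paraboloid t x"
      by (simp add: paraboloid_def mult_left_mono)
    then show "trial a t y \<le> trial a t x"
      unfolding trial_def using assms(2) by (intro mult_left_mono power_mono) auto
  qed
  ultimately show ?thesis
    unfolding H2r_def by blast
qed

lemma wpartial_trial:
  fixes i :: "'n::finite"
  assumes "t \<noteq> 0"
  shows "inLp 2 (wpartial i (trial a t))" "AE x in lborel. wpartial i (trial a t) x = trial_d1 a t i x"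
  using wpartial_if_has_weak_partial[OF cont_bdd_support_inLp_2[OF cont_bdd_support_trial_d1[OF assms]]
      has_weak_partial_trial[OF assms]] by auto

lemma wpartial_wpartial_trial:
  fixes i j :: "'n::finite"
  assumes "t \<noteq> 0"
  shows "inLp 2 (wpartial j (wpartial i (trial a t)))"
    "AE x in lborel. wpartial j (wpartial i (trial a t)) x = trial_d2 a t i j x"
proof -
  have "AE x in lborel. trial_d1 a t i x = wpartial i (trial a t) x"
    using wpartial_trial(2)[OF assms, of i a] by auto
  then have "has_weak_partial j (wpartial i (trial a t)) (trial_d2 a t i j)"
    using wpartial_trial(1)[OF assms, of i a] unfolding inLp_2_iff
    by (intro has_weak_partial_AE_cong[OF cont_bdd_support_measurable[OF cont_bdd_support_trial_d1[OF assms]]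
          _ _ has_weak_partial_trial_d1[OF assms]]) auto
  note wpartial_if_has_weak_partial[OF cont_bdd_support_inLp_2[OF cont_bdd_support_trial_d2[OF assms]] this]
  then show "inLp 2 (wpartial j (wpartial i (trial a t)))"
    "AE x in lborel. wpartial j (wpartial i (trial a t)) x = trial_d2 a t i j x"
    by blast+
qed

lemma grad_norm2_trial:
  assumes "t \<noteq> 0"
  shows "grad_norm2 (trial a t :: real^'n::finite \<Rightarrow> real) = (\<Sum>i\<in>UNIV. (Lnorm 2 (trial_d1 a t (i::'n)))\<^sup>2)"
proof -
  have "Lnorm 2 (wpartial i (trial a t)) = Lnorm 2 (trial_d1 a t i)" for i :: 'n
    using wpartial_trial[OF assms, of i a] cont_bdd_support_measurable[OF cont_bdd_support_trial_d1[OF assms]]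
    by (intro Lnorm_AE_cong) (auto simp: inLp_2_iff)
  then show ?thesis
    by (simp add: grad_norm2_def)
qed

lemma Lnorm_wlaplace_trial:
  assumes "t \<noteq> 0"
  shows "Lnorm 2 (wlaplace (trial a t :: real^'n::finite \<Rightarrow> real))
    = Lnorm 2 (\<lambda>x::real^'n. \<Sum>i\<in>UNIV. trial_d2 a t i i x)"
proof (rule Lnorm_AE_cong)
  show "wlaplace (trial a t) \<in> borel_measurable lborel"
    unfolding wlaplace_def using wpartial_wpartial_trial(1)[OF assms]
    by (intro borel_measurable_sum) (auto simp: inLp_2_iff)
  show "(\<lambda>x::real^'n. \<Sum>i\<in>UNIV. trial_d2 a t i i x) \<in> borel_measurable lborel"
    using cont_bdd_support_measurable[OF cont_bdd_support_trial_d2[OF assms]]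
    by (intro borel_measurable_sum) auto
  have "AE x in lborel. \<forall>i\<in>UNIV. wpartial i (wpartial i (trial a t)) x = trial_d2 a t i i x"
    by (rule AE_finite_allI) (auto intro: wpartial_wpartial_trial(2)[OF assms])
  then show "AE x in lborel. wlaplace (trial a t) x = (\<Sum>i\<in>UNIV. trial_d2 a t i i x)"
    by eventually_elim (simp add: wlaplace_def)
qed

lemma Lnorm_powr_dilate:
  fixes f :: "real^'n::finite \<Rightarrow> real"
  assumes "t > 0" "q > 0"
  shows "Lnorm q (\<lambda>x. a * f (t *\<^sub>R x)) powr q = \<bar>a\<bar> powr q * Lnorm q f powr q / t ^ CARD('n)"
proof -
  have "Lnorm q (\<lambda>x. a * f (t *\<^sub>R x)) powr q = \<bar>a\<bar> powr q * (\<integral>x. \<bar>f (t *\<^sub>R x)\<bar> powr q \<partial>lborel)"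
    unfolding Lnorm_powr[OF assms(2)] by (simp add: abs_mult powr_mult)
  then show ?thesis
    unfolding Lnorm_powr[OF assms(2)] lborel_integral_dilate[OF assms(1), of "\<lambda>x. \<bar>f x\<bar> powr q"]
    by simp
qed

lemma Lnorm_2_squared_dilate:
  fixes f :: "real^'n::finite \<Rightarrow> real"
  assumes "t > 0"
  shows "(Lnorm 2 (\<lambda>x. a * f (t *\<^sub>R x)))\<^sup>2 = a\<^sup>2 * (Lnorm 2 f)\<^sup>2 / t ^ CARD('n)"
proof -
  have "(Lnorm 2 (\<lambda>x. a * f (t *\<^sub>R x)))\<^sup>2 = a\<^sup>2 * (\<integral>x. (f (t *\<^sub>R x))\<^sup>2 \<partial>lborel)"
    unfolding Lnorm_2_squared by (simp add: power_mult_distrib)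
  then show ?thesis
    unfolding Lnorm_2_squared lborel_integral_dilate[OF assms, of "\<lambda>x. (f x)\<^sup>2"] by simp
qed

lemma paraboloid_dilate: "paraboloid 1 (t *\<^sub>R x) = paraboloid t x"
  by (simp add: paraboloid_def power2_eq_square mult.assoc)

lemma trial_dilate: "trial a t = (\<lambda>x. a * trial 1 1 (t *\<^sub>R x))"
  by (simp add: fun_eq_iff trial_def paraboloid_dilate)

lemma trial_d1_dilate: "trial_d1 a t i = (\<lambda>x. (a * t) * trial_d1 1 1 i (t *\<^sub>R x))"
  by (simp add: fun_eq_iff trial_d1_def paraboloid_dilate power2_eq_square)

lemma trial_laplacian_dilate:
  "(\<lambda>x. \<Sum>i\<in>UNIV. trial_d2 a t i i x) = (\<lambda>x. (a * t\<^sup>2) * (\<Sum>i\<in>UNIV. trial_d2 1 1 i i (t *\<^sub>R x)))"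
  by (simp add: fun_eq_iff trial_d2_def paraboloid_dilate sum_distrib_left power2_eq_square
      power4_eq_xxxx algebra_simps)

lemma Lnorm_2_squared_trial:
  fixes a t :: real
  assumes "t > 0"
  shows "(Lnorm 2 (trial a t :: real^'n::finite \<Rightarrow> real))\<^sup>2
    = a\<^sup>2 * (Lnorm 2 (trial 1 1 :: real^'n \<Rightarrow> real))\<^sup>2 / t ^ CARD('n)"
  by (subst trial_dilate) (rule Lnorm_2_squared_dilate[OF assms])

lemma grad_norm2_trial_dilate:
  fixes a t :: real
  assumes "t > 0"
  shows "grad_norm2 (trial a t :: real^'n::finite \<Rightarrow> real)
    = a\<^sup>2 * t\<^sup>2 * grad_norm2 (trial 1 1 :: real^'n \<Rightarrow> real) / t ^ CARD('n)"
proof -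
  have "(Lnorm 2 (trial_d1 a t i))\<^sup>2 = (a * t)\<^sup>2 * (Lnorm 2 (trial_d1 1 1 i))\<^sup>2 / t ^ CARD('n)"
    for i :: 'n
    by (subst trial_d1_dilate) (rule Lnorm_2_squared_dilate[OF assms])
  then show ?thesis
    using assms
    by (simp add: grad_norm2_trial sum_distrib_left sum_divide_distrib power_mult_distrib)
qed

lemma Lnorm_wlaplace_trial_dilate:
  fixes a t :: real
  assumes "t > 0"
  shows "(Lnorm 2 (wlaplace (trial a t :: real^'n::finite \<Rightarrow> real)))\<^sup>2
    = a\<^sup>2 * t ^ 4 * (Lnorm 2 (wlaplace (trial 1 1 :: real^'n \<Rightarrow> real)))\<^sup>2 / t ^ CARD('n)"
proof -
  have "(Lnorm 2 (\<lambda>x::real^'n. \<Sum>i\<in>UNIV. trial_d2 a t i i x))\<^sup>2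
      = (a * t\<^sup>2)\<^sup>2 * (Lnorm 2 (\<lambda>x::real^'n. \<Sum>i\<in>UNIV. trial_d2 1 1 i i x))\<^sup>2 / t ^ CARD('n)"
    by (subst trial_laplacian_dilate) (rule Lnorm_2_squared_dilate[OF assms])
  then show ?thesis
    using assms by (simp add: Lnorm_wlaplace_trial power_mult_distrib power_mult[symmetric])
qed

lemma Lnorm_powr_trial:
  fixes a t q :: real
  assumes "t > 0" "q > 0"
  shows "Lnorm q (trial a t :: real^'n::finite \<Rightarrow> real) powr q
    = \<bar>a\<bar> powr q * Lnorm q (trial 1 1 :: real^'n \<Rightarrow> real) powr q / t ^ CARD('n)"
  by (subst trial_dilate) (rule Lnorm_powr_dilate[OF assms])

lemma integral_pos_if_continuous_nonneg:
  fixes g :: "'a::euclidean_space \<Rightarrow> real"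
  assumes "continuous_on UNIV g" "integrable lborel g" "\<And>x. g x \<ge> 0" "g x0 > 0"
  shows "(\<integral>x. g x \<partial>lborel) > 0"
proof -
  have "isCont g x0"
    using assms(1) by (simp add: continuous_on_eq_continuous_at)
  then obtain d where d: "d > 0" "\<And>y. dist y x0 < d \<Longrightarrow> dist (g y) (g x0) < g x0 / 2"
    using assms(4) unfolding continuous_at_eps_delta using half_gt_zero by blast
  have lower: "indicator (cball x0 (d / 2)) y *\<^sub>R (g x0 / 2) \<le> g y" for y
  proof (cases "y \<in> cball x0 (d / 2)")
    case True
    then have "\<bar>g y - g x0\<bar> < g x0 / 2"
      using d by (simp add: dist_commute dist_real_def)
    then have "g x0 / 2 < g y"
      using abs_less_iff[of "g y - g x0" "g x0 / 2"] by linarith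
    then show ?thesis
      using True by simp
  qed (use assms(3) in simp)
  have "integrable lborel (\<lambda>y. indicator (cball x0 (d / 2)) y *\<^sub>R (g x0 / 2))"
    by (rule borel_integrable_compact) (auto intro: continuous_intros)
  then have "(\<integral>y. indicator (cball x0 (d / 2)) y *\<^sub>R (g x0 / 2) \<partial>lborel) \<le> (\<integral>x. g x \<partial>lborel)"
    by (rule integral_mono[OF _ assms(2) lower])
  moreover have "(\<integral>y. indicator (cball x0 (d / 2)) y *\<^sub>R (g x0 / 2) \<partial>lborel)
      = measure lborel (cball x0 (d / 2)) * (g x0 / 2)"
    by simp
  moreover have "measure lborel (cball x0 (d / 2)) > 0"
    using content_cball_pos[of "d / 2" x0] d(1) by simp
  ultimately show ?thesis
    using assms(4) by (metis half_gt_zero less_le_trans mult_pos_pos)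
qed

lemma Lnorm_trial_pos:
  assumes "q > 0"
  shows "Lnorm q (trial 1 1 :: real^'n::finite \<Rightarrow> real) > 0"
proof -
  have trial: "cont_bdd_support (trial 1 1 :: real^'n \<Rightarrow> real)"
    by (rule cont_bdd_support_trial) simp
  then have "continuous_on UNIV (\<lambda>x::real^'n. \<bar>trial 1 1 x\<bar>)"
    unfolding cont_bdd_support_def by (intro continuous_on_rabs) simp
  then have cont: "continuous_on UNIV (\<lambda>x::real^'n. \<bar>trial 1 1 x\<bar> powr q)"
    using assms by (intro continuous_on_powr') auto
  have "{x::real^'n. \<bar>trial 1 1 x\<bar> powr q \<noteq> 0} \<subseteq> {x. trial 1 1 x \<noteq> 0}"
    by (intro subsetI) simp
  then have "bounded {x::real^'n. \<bar>trial 1 1 x\<bar> powr q \<noteq> 0}"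
    using trial bounded_subset unfolding cont_bdd_support_def by metis
  then have "integrable lborel (\<lambda>x::real^'n. \<bar>trial 1 1 x\<bar> powr q)"
    using cont by (intro cont_bdd_support_integrable) (simp add: cont_bdd_support_def)
  then have "(\<integral>x. \<bar>trial 1 1 x\<bar> powr q \<partial>(lborel :: (real^'n) measure)) > 0"
    by (rule integral_pos_if_continuous_nonneg[OF cont _ _, of 0]) (simp_all add: trial_def paraboloid_def)
  then show ?thesis
    unfolding Lnorm_def by simp
qed

section \<open>The energy is bounded below on \<open>V\<^sub>r(c)\<close>\<close>

lemma Sob_const_le_quotient:
  fixes u :: "real^'n::finite \<Rightarrow> real"
  assumes "u \<in> H2" "Lnorm 2 u \<noteq> 0"
  shows "Sob_const TYPE('n) \<le> (Lnorm 2 (wlaplace u))\<^sup>2 / (Lnorm (crit TYPE('n)) u)\<^sup>2"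
  unfolding Sob_const_def using assms by (intro cInf_lower bdd_belowI[of _ 0]) auto

lemma Sob_const_nonneg: "0 \<le> Sob_const TYPE('n::finite)"
proof -
  have "trial 1 1 \<in> (H2r :: (real^'n \<Rightarrow> real) set)"
    by (rule trial_in_H2r) simp_all
  moreover have "Lnorm 2 (trial 1 1 :: real^'n \<Rightarrow> real) > 0"
    by (rule Lnorm_trial_pos) simp
  ultimately show ?thesis
    unfolding Sob_const_def H2r_def by (intro cInf_greatest) force+
qed

text \<open>If \<open>|u|\<^sup>4\<^sup>*\<close> were not integrable, then \<open>\<parallel>u\<parallel>\<^sub>4\<^sub>* = 0\<close> and the Sobolev quotient of \<open>u\<close>
  would be \<open>0\<close> (division by zero), contradicting \<open>S > 0\<close>.\<close>

lemma Lnorm_crit_powr_le: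
  fixes u :: "real^'n::finite \<Rightarrow> real"
  defines "s \<equiv> crit TYPE('n)" and "S \<equiv> Sob_const TYPE('n)"
  assumes S: "S > 0" and s: "s > 0" and u: "u \<in> H2" "Lnorm 2 u \<noteq> 0"
    and R: "(Lnorm 2 (wlaplace u))\<^sup>2 \<le> R"
  shows "Lnorm s u powr s \<le> (R / S) powr (s / 2)"
    and "integrable lborel (\<lambda>x. \<bar>u x\<bar> powr s)"
proof -
  have quotient: "S \<le> (Lnorm 2 (wlaplace u))\<^sup>2 / (Lnorm s u)\<^sup>2"
    unfolding S_def s_def by (rule Sob_const_le_quotient[OF u])
  have pos: "Lnorm s u > 0"
    using S quotient by (cases "Lnorm s u = 0") (auto simp: Lnorm_def)
  have "S * (Lnorm s u)\<^sup>2 \<le> R"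
    using quotient pos R by (simp add: le_divide_eq)
  then have "(Lnorm s u)\<^sup>2 \<le> R / S"
    by (subst pos_le_divide_eq[OF S]) (simp add: mult.commute)
  then have "((Lnorm s u)\<^sup>2) powr (s / 2) \<le> (R / S) powr (s / 2)"
    using s by (intro powr_mono2) auto
  moreover have "((Lnorm s u)\<^sup>2) powr (s / 2) = (Lnorm s u powr 2) powr (s / 2)"
    using pos by (simp add: powr_numeral)
  moreover have "(Lnorm s u powr 2) powr (s / 2) = Lnorm s u powr s"
    by (simp add: powr_powr)
  ultimately show "Lnorm s u powr s \<le> (R / S) powr (s / 2)"
    by simp
  show "integrable lborel (\<lambda>x. \<bar>u x\<bar> powr s)"
  proof (rule ccontr)
    assume "\<not> integrable lborel (\<lambda>x. \<bar>u x\<bar> powr s)"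
    then have "Lnorm s u = 0"
      unfolding Lnorm_def by (simp add: not_integrable_integral_eq)
    then show False
      using pos by simp
  qed
qed

lemma powr_le_powr_add_powr:
  fixes y :: real
  assumes "a \<le> p" "p \<le> b" "0 \<le> y"
  shows "y powr p \<le> y powr a + y powr b"
proof (cases "y \<le> 1")
  case True
  then have "y powr p \<le> y powr a"
    using assms by (intro powr_mono') auto
  then show ?thesis
    by (simp add: add_increasing2)
next
  case False
  then have "y powr p \<le> y powr b"
    using assms by (intro powr_mono) auto
  then show ?thesis
    by (simp add: add_increasing)
qed

lemma Lnorm_powr_interpolate:
  fixes u :: "real^'n::finite \<Rightarrow> real"
  assumes "0 < a" "a \<le> p" "p \<le> b"
    and "integrable lborel (\<lambda>x. \<bar>u x\<bar> powr a)" "integrable lborel (\<lambda>x. \<bar>u x\<bar> powr b)"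
  shows "Lnorm p u powr p \<le> Lnorm a u powr a + Lnorm b u powr b"
proof -
  have "Lnorm p u powr p = (\<integral>x. \<bar>u x\<bar> powr p \<partial>lborel)"
    using assms(1,2) by (intro Lnorm_powr) simp
  also have "\<dots> \<le> (\<integral>x. \<bar>u x\<bar> powr a + \<bar>u x\<bar> powr b \<partial>lborel)"
  proof (rule integral_mono')
    show "integrable lborel (\<lambda>x. \<bar>u x\<bar> powr a + \<bar>u x\<bar> powr b)"
      using assms(4,5) by (rule Bochner_Integration.integrable_add)
    show "\<bar>u x\<bar> powr p \<le> \<bar>u x\<bar> powr a + \<bar>u x\<bar> powr b" for x
      using assms(2,3) by (rule powr_le_powr_add_powr) simp
  qed simp
  also have "\<dots> = (\<integral>x. \<bar>u x\<bar> powr a \<partial>lborel) + (\<integral>x. \<bar>u x\<bar> powr b \<partial>lborel)"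
    using assms(4,5) by (rule Bochner_Integration.integral_add)
  also have "\<dots> = Lnorm a u powr a + Lnorm b u powr b"
    using assms(1-3) by (simp add: Lnorm_powr)
  finally show ?thesis .
qed

lemma Ifun_lower_bound:
  fixes u :: "real^'n::finite \<Rightarrow> real" and \<mu> p c :: real
  defines "s \<equiv> crit TYPE('n)" and "S \<equiv> Sob_const TYPE('n)" and "r \<equiv> rstar TYPE('n) \<mu> p"
  assumes s: "2 < p" "p < s" and \<mu>: "\<mu> > 0" and c: "c > 0" and S: "S > 0" and u: "u \<in> Vr \<mu> p c"
  shows "Ifun \<mu> p u \<ge> - (\<mu> / p) * (c + (r\<^sup>2 / S) powr (s / 2)) - 1 / s * (r\<^sup>2 / S) powr (s / 2)"
proof -
  define L where "L = (Lnorm 2 (wlaplace u))\<^sup>2"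
  define B where "B = (r\<^sup>2 / S) powr (s / 2)"
  have H2: "u \<in> H2" and mass: "(Lnorm 2 u)\<^sup>2 = c" and small: "L + grad_norm2 u < r\<^sup>2"
    using u unfolding Vr_def Sr_def H2r_def L_def r_def by auto
  have grad: "grad_norm2 u \<ge> 0"
    unfolding grad_norm2_def by (intro sum_nonneg) auto
  have L_le: "(Lnorm 2 (wlaplace u))\<^sup>2 \<le> r\<^sup>2"
    using small grad unfolding L_def by linarith
  have s0: "crit TYPE('n) > 0"
    using s unfolding s_def by simp
  have "Lnorm 2 u \<noteq> 0"
    using mass c by auto
  note crit = Lnorm_crit_powr_le[OF S[unfolded S_def] s0 H2 this L_le, folded s_def S_def, folded B_def]
  have "integrable lborel (\<lambda>x. \<bar>u x\<bar> powr 2)"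
    using H2 unfolding H2_def inLp_def by blast
  then have "Lnorm p u powr p \<le> Lnorm 2 u powr 2 + Lnorm s u powr s"
    using s crit(2) by (intro Lnorm_powr_interpolate) auto
  also have "Lnorm 2 u powr 2 = c"
    using mass abs_powr_2[of "Lnorm 2 u"] by (simp add: Lnorm_def)
  finally have "\<mu> / p * Lnorm p u powr p \<le> \<mu> / p * (c + B)"
    using \<mu> s crit(1) by (intro mult_left_mono) auto
  moreover have "1 / s * Lnorm s u powr s \<le> 1 / s * B"
    using crit(1) s by (intro mult_left_mono) auto
  moreover have "Ifun \<mu> p u = 1/2 * L + 1/2 * grad_norm2 u - \<mu> / p * Lnorm p u powr p - 1 / s * Lnorm s u powr s"
    unfolding Ifun_def L_def s_def by simp
  moreover have "L \<ge> 0"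
    unfolding L_def by simp
  ultimately show ?thesis
    using grad unfolding B_def by linarith
qed
section \<open>Trial functions of negative energy in \<open>V\<^sub>r(c)\<close>\<close>

lemma exists_small_scale:
  fixes K B \<beta> r :: real
  assumes "0 \<le> K" "0 < B" "0 < \<beta>" "\<beta> < 2" "0 < r"
  obtains t where "0 < t" "t \<le> 1" "K * t\<^sup>2 < r\<^sup>2" "K * t\<^sup>2 < B * t powr \<beta>"
proof -
  have "((\<lambda>t. K * t\<^sup>2) \<longlongrightarrow> K * 0\<^sup>2) (at_right (0::real))"
    by (intro tendsto_intros)
  moreover have "K * 0\<^sup>2 < r\<^sup>2"
    using assms(5) by simp
  ultimately have "\<forall>\<^sub>F t in at_right 0. K * t\<^sup>2 < r\<^sup>2"
    by (rule order_tendstoD(2))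
  moreover have "\<forall>\<^sub>F t in at_right (0::real). 0 \<le> t"
    by (simp add: eventually_at_right_field) (use zero_less_one in blast)
  then have "((\<lambda>t. K * t powr (2 - \<beta>)) \<longlongrightarrow> K * 0) (at_right (0::real))"
    using assms(4)
    by (intro tendsto_mult tendsto_const tendsto_zero_powrI[where b="2 - \<beta>"] tendsto_ident_at) simp_all
  then have "\<forall>\<^sub>F t in at_right 0. K * t powr (2 - \<beta>) < B"
    using assms(2) by (intro order_tendstoD(2)) simp_all
  moreover have "\<forall>\<^sub>F t in at_right (0::real). 0 < t \<and> t \<le> 1"
    unfolding eventually_at_right_field by (intro exI[of _ 1]) auto
  ultimately have "\<forall>\<^sub>F t in at_right (0::real). 0 < t \<and> t \<le> 1 \<and> K * t\<^sup>2 < r\<^sup>2 \<and> K * t powr (2 - \<beta>) < B"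
    by eventually_elim auto
  then obtain t where t: "0 < t" "t \<le> 1" "K * t\<^sup>2 < r\<^sup>2" "K * t powr (2 - \<beta>) < B"
    using eventually_happens' trivial_limit_at_right_real by blast
  have "K * t\<^sup>2 = K * t powr (2 - \<beta>) * t powr \<beta>"
    using t(1) by (simp add: mult.assoc powr_add[symmetric] powr_numeral)
  also have "\<dots> < B * t powr \<beta>"
    using t by simp
  finally show ?thesis
    using that t by blast
qed

lemma powr_sqrt_amplitude:
  fixes c t M p :: real
  assumes "0 < c" "0 < t" "0 < M"
  shows "\<bar>sqrt (c * t ^ n / M)\<bar> powr p / t ^ n = (c / M) powr (p / 2) * t powr (real n * p / 2 - real n)"
proof -
  have "\<bar>sqrt (c * t ^ n / M)\<bar> powr p = (\<bar>sqrt (c * t ^ n / M)\<bar> powr 2) powr (p / 2)"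
    by (subst powr_powr) simp
  also have "\<dots> = (c / M * t powr real n) powr (p / 2)"
    unfolding abs_powr_2 using assms by (simp add: powr_realpow)
  also have "\<dots> = (c / M) powr (p / 2) * (t powr real n) powr (p / 2)"
    using assms powr_mult[of "c / M" "t powr real n" "p / 2"] by simp
  also have "(t powr real n) powr (p / 2) = t powr (real n * p / 2)"
    by (simp add: powr_powr)
  finally show ?thesis
    using assms by (simp add: powr_realpow powr_diff)
qed

lemma normalized_trial_energy:
  fixes c t p :: real
  defines "u1 \<equiv> trial 1 1 :: real^'n::finite \<Rightarrow> real"
  defines "M \<equiv> (Lnorm 2 u1)\<^sup>2"
  defines "u \<equiv> trial (sqrt (c * t ^ CARD('n) / M)) t :: real^'n \<Rightarrow> real"
  assumes c: "0 < c" and t: "0 < t" "t \<le> 1" and p: "0 < p"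
  shows "(Lnorm 2 u)\<^sup>2 = c"
    and "(Lnorm 2 (wlaplace u))\<^sup>2 + grad_norm2 u \<le> c * ((Lnorm 2 (wlaplace u1))\<^sup>2 + grad_norm2 u1) / M * t\<^sup>2"
    and "Lnorm p u powr p = (c / M) powr (p / 2) * Lnorm p u1 powr p * t powr (2 * p * gam TYPE('n) p)"
proof -
  define a where "a = sqrt (c * t ^ CARD('n) / M)"
  have "Lnorm 2 u1 > 0"
    unfolding u1_def by (rule Lnorm_trial_pos) simp
  then have M: "M > 0"
    unfolding M_def by simp
  have a2: "a\<^sup>2 = c * t ^ CARD('n) / M"
    unfolding a_def using c t M by simp
  show "(Lnorm 2 u)\<^sup>2 = c"
    unfolding u_def a_def[symmetric] Lnorm_2_squared_trial[OF t(1)] a2 M_def[symmetric] u1_def[symmetric]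
    using t M by simp
  have "(Lnorm 2 (wlaplace u))\<^sup>2 + grad_norm2 u
      = c * (t ^ 4 * (Lnorm 2 (wlaplace u1))\<^sup>2 + t\<^sup>2 * grad_norm2 u1) / M"
    unfolding u_def a_def[symmetric] Lnorm_wlaplace_trial_dilate[OF t(1)] grad_norm2_trial_dilate[OF t(1)] a2
      u1_def[symmetric]
    using t M by (simp add: add_divide_distrib distrib_left)
  also have "\<dots> \<le> c * (t\<^sup>2 * (Lnorm 2 (wlaplace u1))\<^sup>2 + t\<^sup>2 * grad_norm2 u1) / M"
    using t c M power_decreasing[of 2 4 t]
    by (intro divide_right_mono mult_left_mono add_mono mult_right_mono) auto
  finally show "(Lnorm 2 (wlaplace u))\<^sup>2 + grad_norm2 u \<le> c * ((Lnorm 2 (wlaplace u1))\<^sup>2 + grad_norm2 u1) / M * t\<^sup>2"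
    by (simp add: algebra_simps)
  have "real CARD('n) * p / 2 - real CARD('n) = 2 * p * gam TYPE('n) p"
    using p by (simp add: gam_def dimN_def field_simps)
  then have "\<bar>a\<bar> powr p / t ^ CARD('n) = (c / M) powr (p / 2) * t powr (2 * p * gam TYPE('n) p)"
    unfolding a_def using powr_sqrt_amplitude[OF c t(1) M, of "CARD('n)" p] by simp
  moreover have "Lnorm p u powr p = \<bar>a\<bar> powr p / t ^ CARD('n) * Lnorm p u1 powr p"
    unfolding u_def a_def[symmetric] Lnorm_powr_trial[OF t(1) p] u1_def[symmetric] by simp
  ultimately show "Lnorm p u powr p = (c / M) powr (p / 2) * Lnorm p u1 powr p * t powr (2 * p * gam TYPE('n) p)"
    by (simp add: ac_simps)
qed
lemma exists_negative_energy:
  fixes \<mu> p c :: real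
  assumes c: "0 < c" and r: "0 < rstar TYPE('n::finite) \<mu> p" and \<mu>: "0 < \<mu>"
    and p: "2 < p" "p * gam TYPE('n) p < 1" and s: "0 < crit TYPE('n)"
  shows "\<exists>u \<in> (Vr \<mu> p c :: (real^'n \<Rightarrow> real) set). Ifun \<mu> p u < 0"
proof -
  define u1 where "u1 = (trial 1 1 :: real^'n \<Rightarrow> real)"
  define M where "M = (Lnorm 2 u1)\<^sup>2"
  define K where "K = c * ((Lnorm 2 (wlaplace u1))\<^sup>2 + grad_norm2 u1) / M"
  define B where "B = \<mu> / p * ((c / M) powr (p / 2) * Lnorm p u1 powr p)"
  define \<beta> where "\<beta> = 2 * p * gam TYPE('n) p"
  have "Lnorm 2 u1 > 0" "Lnorm p u1 > 0"
    unfolding u1_def using p by (auto intro: Lnorm_trial_pos)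
  then have M: "M > 0" and B: "B > 0"
    unfolding M_def B_def using c \<mu> p by auto
  have K: "K \<ge> 0"
    unfolding K_def grad_norm2_def using c M
    by (intro divide_nonneg_pos mult_nonneg_nonneg add_nonneg_nonneg sum_nonneg) auto
  have "0 < \<beta>" "\<beta> < 2"
    unfolding \<beta>_def using p by (auto simp: gam_def dimN_def)
  then obtain t where t: "0 < t" "t \<le> 1" "K * t\<^sup>2 < (rstar TYPE('n) \<mu> p)\<^sup>2" "K * t\<^sup>2 < B * t powr \<beta>"
    using exists_small_scale[OF K B _ _ r] by blast
  define u where "u = (trial (sqrt (c * t ^ CARD('n) / M)) t :: real^'n \<Rightarrow> real)"
  have "0 < p"
    using p by simp
  note energy = normalized_trial_energy[OF c t(1,2) this, where 'n='n, folded u1_def, folded M_def,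
      folded u_def, folded K_def \<beta>_def]
  have "u \<in> H2r"
    unfolding u_def using t c M by (intro trial_in_H2r) auto
  then have in_Vr: "u \<in> Vr \<mu> p c"
    unfolding Vr_def Sr_def using energy(1,2) t(3) by auto
  have "\<mu> / p * Lnorm p u powr p = B * t powr \<beta>"
    unfolding energy(3) B_def by simp
  moreover have "0 \<le> 1 / crit TYPE('n) * Lnorm (crit TYPE('n)) u powr crit TYPE('n)"
    using s by simp
  moreover have "0 \<le> K * t\<^sup>2"
    using K by simp
  ultimately have "Ifun \<mu> p u < 0"
    using energy(2) t(4) unfolding Ifun_def by linarith
  with in_Vr show ?thesis
    by blast
qed

lemma exponent_bounds:
  fixes p :: real
  assumes "CARD('n::finite) \<ge> 5" "2 < p" "p < 2 + 4 / real CARD('n)"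
  shows "2 < crit TYPE('n)" "p < crit TYPE('n)" "p * gam TYPE('n) p < 1"
proof -
  define N where "N = real CARD('n)"
  have N: "N \<ge> 5"
    using assms(1) by (simp add: N_def)
  have crit: "crit TYPE('n) = 2 + 8 / (N - 4)"
    unfolding crit_def dimN_def N_def[symmetric] using N by (simp add: field_simps)
  show "2 < crit TYPE('n)"
    unfolding crit using N by simp
  have "4 / N < 8 / (N - 4)"
    using N by (simp add: field_simps)
  then show "p < crit TYPE('n)"
    using assms(3) unfolding crit N_def by linarith
  have "N * (p - 2) < 4"
    using assms(3) N unfolding N_def by (simp add: field_simps)
  moreover have "p * gam TYPE('n) p = N * (p - 2) / 4"
    using assms(2) unfolding gam_def dimN_def N_def[symmetric] by (simp add: field_simps)
  ultimately show "p * gam TYPE('n) p < 1"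
    by simp
qed

text \<open>\<open>\<E>\<close> vanishes as soon as \<open>S\<close> or \<open>C\<^sub>N\<^sub>,\<^sub>p\<close> does, and then \<open>c\<^sub>* = (1/0) powr _ = 0\<close>
  because of the conventions \<open>1/0 = 0\<close> and \<open>0 powr _ = 0\<close>.\<close>

lemma constants_nonzero_if_cstar_pos:
  assumes "0 < cstar n \<mu> p"
  shows "Sob_const n \<noteq> 0" "GN_const n p \<noteq> 0"
proof -
  have "Ecal n \<mu> p \<noteq> 0"
    using assms by (auto simp: cstar_def Let_def)
  then show "Sob_const n \<noteq> 0" "GN_const n p \<noteq> 0"
    by (auto simp: Ecal_def Let_def)
qed

text \<open>A real power of a nonzero base is positive, whatever the sign of the base.\<close>

lemma rstar_pos:
  assumes "0 < cstar n \<mu> p" "\<mu> \<noteq> 0" "p \<noteq> 0" "crit n \<noteq> 0" "crit n \<noteq> 2" "p * gam n p \<noteq> 2"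
  shows "0 < rstar n \<mu> p"
  using assms constants_nonzero_if_cstar_pos[OF assms(1)] by (simp add: rstar_def rc_def Let_def)

theorem lemma3p2:
  fixes \<mu> p c :: real
  assumes "CARD('n::finite) \<ge> 5"
    and "\<mu> > 0"
    and "2 < p" and "p < 2 + 4 / real CARD('n)"
    and "0 < c" and "c < cstar TYPE('n) \<mu> p"
  shows "bdd_below (Ifun \<mu> p ` (Vr \<mu> p c :: (real^'n \<Rightarrow> real) set))
       \<and> (Vr \<mu> p c :: (real^'n \<Rightarrow> real) set) \<noteq> {}
       \<and> Inf (Ifun \<mu> p ` (Vr \<mu> p c :: (real^'n \<Rightarrow> real) set)) < 0"
proof -
  note exponents = exponent_bounds[OF assms(1,3,4)]
  have cstar: "0 < cstar TYPE('n) \<mu> p"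
    using assms(5,6) by linarith
  have S: "0 < Sob_const TYPE('n)"
    using Sob_const_nonneg constants_nonzero_if_cstar_pos(1)[OF cstar] by (simp add: order_less_le)
  have r: "0 < rstar TYPE('n) \<mu> p"
    using assms(2,3) exponents by (intro rstar_pos[OF cstar]) auto
  have bdd: "bdd_below (Ifun \<mu> p ` (Vr \<mu> p c :: (real^'n \<Rightarrow> real) set))"
    using Ifun_lower_bound[OF assms(3) exponents(2) assms(2,5) S] by (rule bdd_belowI2)
  obtain u :: "real^'n \<Rightarrow> real" where u: "u \<in> Vr \<mu> p c" "Ifun \<mu> p u < 0"
    using exists_negative_energy[OF assms(5) r assms(2,3) exponents(3)] exponents(1) by auto
  have "Inf (Ifun \<mu> p ` (Vr \<mu> p c :: (real^'n \<Rightarrow> real) set)) \<le> Ifun \<mu> p u"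
    using u(1) bdd by (intro cInf_lower imageI)
  then show ?thesis
    using bdd u by auto
qed

end
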